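(* Let $\eta=(x_1,\dots,x_s;\sigma_0,\dots,\sigma_s)\in\widetilde{\mathbb{B}}(\lambda)_{\mathrm{cl}}$. Let $j\in I$ and $1\le u\le s-1$ with $\langle x_{u+1}\Lambda,\alpha_j^\vee\rangle>0$, and let $x_u=w_0\xleftarrow{\beta_1}w_1\xleftarrow{}\cdots\xleftarrow{\beta_n}w_n=x_{u+1}$ be a directed $\sigma_u$-path from $x_{u+1}$ to $x_u$. If there exists $0\le k<n$ with $\langle w_k\Lambda,\alpha_j^\vee\rangle\le0$, then $H^\eta_j(\sigma_u)\in\mathbb{Z}$. In particular, if $\langle x_u\Lambda,\alpha_j^\vee\rangle\le0$, then $H^\eta_j(\sigma_u)\in\mathbb{Z}$.
   Context: Let $\mathfrak{g}$ be an untwisted affine Lie algebra with index set $I$, distinguished node $0$, $I_0=I\setminus\{0\}$, simple roots $\alpha_j$, coroots $\alpha_j^\vee$, fundamental weights $\Lambda_j$, null root $\delta$, central element $c$, weight lattice $P$; $\mathrm{cl}:\mathfrak{h}^*\to\mathfrak{h}^*/\mathbb{C}\delta$, $P_{\mathrm{cl}}=\mathrm{cl}(P)$ with pairing $\langle\mathrm{cl}(\mu),\alpha_j^\vee\rangle=\langle\mu,\alpha_j^\vee\rangle$. Let $\Delta_0$ be the finite root system (indexed by $I_0$) with positive roots $\Delta_0^+$, highest root $\theta$, Weyl group $W_0$ generated by $r_j$ ($j\in I_0$); $\alpha_0^\vee=-\theta^\vee+c$. Let $\lambda=\sum_{i\in I_0}m_i\varpi_i$ ($m_i\in\mathbb{Z}_{\ge0}$,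 $\varpi_i=\Lambda_i-a_i^\vee\Lambda_0$), $\Lambda=\mathrm{cl}(\lambda)$, $J=\{j\in I_0\mid\langle\Lambda,\alpha_j^\vee\rangle=0\}$, $W_J=\langle r_j\mid j\in J\rangle$, $\Delta_J^+=\Delta_0^+\cap\bigoplus_{j\in J}\mathbb{Z}\alpha_j$, $W_0^J$ the minimal-length representatives of $W_0/W_J$, $\lfloor w\rfloor$ the representative of $wW_J$, $\ell$ the length, $\rho,\rho_J$ half-sums of positive roots of $\Delta_0,\Delta_J$. The parabolic quantum Bruhat graph has vertices $W_0^J$ and an edge $\lfloor wr_\beta\rfloor\xleftarrow{\beta}w$ for $w\in W_0^J$, $\beta\in\Delta_0^+\setminus\Delta_J^+$ whenever $\ell(\lfloor wr_\beta\rfloor)=\ell(w)+1$ or $\ell(\lfloor wr_\beta\rfloor)=\ell(w)-2\langle\rho-\rho_J,\beta^\vee\rangle+1$. For rational $0<\sigma<1$, a directed $\sigma$-path from $y$ to $x$ is a chain of edges $x=w_0\xleftarrow{\beta_1}\cdots\xleftarrow{\beta_n}w_n=y$ with $\sigma\langle\Lambda,\beta_k^\vee\rangle\in\mathbb{Z}$ for all $k$. $\widetilde{\mathbb{B}}(\lambda)_{\mathrm{cl}}$ is the set of pairs $\eta=(x_1,\dots,x_s;\sigma_0,\dots,\sigma_s)$ with $x_k\in W_0^J$, $x_k\ne x_{k+1}$, rationals $0=\sigma_0<\dots<\sigma_s=1$, such that for each $1\le k\le s-1$ a directed $\sigma_k$-path from $x_{k+1}$ to $x_k$ exists; $\eta$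 is identified with the map $\eta:[0,1]\to\mathbb{R}\otimes P_{\mathrm{cl}}$, $\eta(t)=\sum_{l=1}^{k-1}(\sigma_l-\sigma_{l-1})x_l\Lambda+(t-\sigma_{k-1})x_k\Lambda$ for $\sigma_{k-1}\le t\le\sigma_k$. $H^\eta_j(t)=\langle\eta(t),\alpha_j^\vee\rangle$. *)

theory Defs
  imports "HOL-Analysis.Analysis"
begin

text \<open>The finite root system \<Delta>0 (indexed by I0 = {1..r}) of the
untwisted affine Lie algebra is realised as a reduced, irreducible, crystallographic root system
R in a Euclidean space 'a, with simple roots alpha 1, ..., alpha r. The affine node 0 is the
index 0; I = {0..r}.\<close>

definition coroot_pair :: "'a::euclidean_space \<Rightarrow> 'a \<Rightarrow> real" where
  "coroot_pair x b = 2 * (x \<bullet> b) / (b \<bullet> b)"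

definition refl_v :: "'a::euclidean_space \<Rightarrow> 'a \<Rightarrow> 'a" where
  "refl_v b x = x - coroot_pair x b *\<^sub>R b"

definition root_system :: "'a::euclidean_space set \<Rightarrow> bool" where
  "root_system R \<longleftrightarrow> finite R \<and> 0 \<notin> R \<and> span R = UNIV \<and>
     (\<forall>a\<in>R. \<forall>b\<in>R. refl_v a b \<in> R \<and> coroot_pair b a \<in> \<int>) \<and>
     (\<forall>a\<in>R. \<forall>c::real. c *\<^sub>R a \<in> R \<longrightarrow> c = 1 \<or> c = -1)"

definition irreducible_rs :: "'a::euclidean_space set \<Rightarrow> bool" where
  "irreducible_rs R \<longleftrightarrow> \<not> (\<exists>R1 R2. R1 \<noteq> {} \<and> R2 \<noteq> {} \<and> R1 \<union> R2 = R \<and>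
      (\<forall>a\<in>R1. \<forall>b\<in>R2. a \<bullet> b = 0))"

definition nonneg_comb :: "nat \<Rightarrow> (nat \<Rightarrow> 'a::euclidean_space) \<Rightarrow> 'a set" where
  "nonneg_comb r alpha = {v. \<exists>c::nat\<Rightarrow>nat. v = (\<Sum>i=1..r. of_nat (c i) *\<^sub>R alpha i)}"

definition simple_system :: "'a::euclidean_space set \<Rightarrow> nat \<Rightarrow> (nat \<Rightarrow> 'a) \<Rightarrow> bool" where
  "simple_system R r alpha \<longleftrightarrow> (\<forall>i\<in>{1..r}. alpha i \<in> R) \<and> inj_on alpha {1..r} \<and>
     independent (alpha ` {1..r}) \<and>
     (\<forall>b\<in>R. b \<in> nonneg_comb r alpha \<or> - b \<in> nonneg_comb r alpha)"

definition pos_roots :: "'a::euclidean_space set \<Rightarrow> nat \<Rightarrow> (nat \<Rightarrow> 'a) \<Rightarrow> 'a set" where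
  "pos_roots R r alpha = R \<inter> nonneg_comb r alpha"

definition pos_roots_J :: "'a::euclidean_space set \<Rightarrow> nat \<Rightarrow> (nat \<Rightarrow> 'a) \<Rightarrow> nat set \<Rightarrow> 'a set" where
  "pos_roots_J R r alpha J = pos_roots R r alpha \<inter>
     {v. \<exists>c::nat\<Rightarrow>int. v = (\<Sum>i\<in>J. of_int (c i) *\<^sub>R alpha i)}"

definition highest_root :: "'a::euclidean_space set \<Rightarrow> nat \<Rightarrow> (nat \<Rightarrow> 'a) \<Rightarrow> 'a \<Rightarrow> bool" where
  "highest_root R r alpha \<theta> \<longleftrightarrow> \<theta> \<in> pos_roots R r alpha \<and>
     (\<forall>b\<in>pos_roots R r alpha. \<theta> - b \<in> nonneg_comb r alpha)"

definition wprod :: "(nat \<Rightarrow> 'a::euclidean_space) \<Rightarrow> nat list \<Rightarrow> 'a \<Rightarrow> 'a" where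
  "wprod alpha is = foldr (\<lambda>i f. refl_v (alpha i) \<circ> f) is id"

definition weyl_gen :: "(nat \<Rightarrow> 'a::euclidean_space) \<Rightarrow> nat set \<Rightarrow> ('a \<Rightarrow> 'a) set" where
  "weyl_gen alpha K = {wprod alpha is | is. set is \<subseteq> K}"

definition wlen :: "nat \<Rightarrow> (nat \<Rightarrow> 'a::euclidean_space) \<Rightarrow> ('a \<Rightarrow> 'a) \<Rightarrow> nat" where
  "wlen r alpha w = (LEAST n. \<exists>is. set is \<subseteq> {1..r} \<and> length is = n \<and> wprod alpha is = w)"

definition Jset :: "nat \<Rightarrow> (nat \<Rightarrow> 'a::euclidean_space) \<Rightarrow> 'a \<Rightarrow> nat set" where
  "Jset r alpha lam = {j\<in>{1..r}. coroot_pair lam (alpha j) = 0}"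

definition minrep :: "nat \<Rightarrow> (nat \<Rightarrow> 'a::euclidean_space) \<Rightarrow> nat set \<Rightarrow> ('a \<Rightarrow> 'a) set" where
  "minrep r alpha J = {w \<in> weyl_gen alpha {1..r}.
      \<forall>v\<in>weyl_gen alpha J. wlen r alpha w \<le> wlen r alpha (w \<circ> v)}"

definition floorJ :: "nat \<Rightarrow> (nat \<Rightarrow> 'a::euclidean_space) \<Rightarrow> nat set \<Rightarrow> ('a \<Rightarrow> 'a) \<Rightarrow> ('a \<Rightarrow> 'a)" where
  "floorJ r alpha J w = (THE u. u \<in> minrep r alpha J \<and> (\<exists>v\<in>weyl_gen alpha J. u = w \<circ> v))"

definition rho_vec :: "'a::euclidean_space set \<Rightarrow> 'a" where
  "rho_vec S = (1/2) *\<^sub>R (\<Sum>g\<in>S. g)"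

text \<open>Edge  floorJ (w r_b) <-b- w  of the parabolic quantum Bruhat graph.\<close>
definition qbg_edge :: "'a::euclidean_space set \<Rightarrow> nat \<Rightarrow> (nat \<Rightarrow> 'a) \<Rightarrow> nat set \<Rightarrow>
    ('a \<Rightarrow> 'a) \<Rightarrow> 'a \<Rightarrow> ('a \<Rightarrow> 'a) \<Rightarrow> bool" where
  "qbg_edge R r alpha J w b w' \<longleftrightarrow>
     w \<in> minrep r alpha J \<and> b \<in> pos_roots R r alpha - pos_roots_J R r alpha J \<and>
     w' = floorJ r alpha J (w \<circ> refl_v b) \<and>
     (real (wlen r alpha w') = real (wlen r alpha w) + 1 \<or>
      real (wlen r alpha w') = real (wlen r alpha w)
         - 2 * coroot_pair (rho_vec (pos_roots R r alpha) - rho_vec (pos_roots_J R r alpha J)) b + 1)"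

text \<open>Directed sigma-path from y to x:
  x = ws!0 <-(bs!0)- ws!1 <- ... <-(bs!(n-1))- ws!n = y.\<close>
definition sigma_path :: "'a::euclidean_space set \<Rightarrow> nat \<Rightarrow> (nat \<Rightarrow> 'a) \<Rightarrow> 'a \<Rightarrow> real \<Rightarrow>
    ('a \<Rightarrow> 'a) \<Rightarrow> ('a \<Rightarrow> 'a) \<Rightarrow> nat \<Rightarrow> ('a \<Rightarrow> 'a) list \<Rightarrow> 'a list \<Rightarrow> bool" where
  "sigma_path R r alpha lam \<sigma> y x n ws bs \<longleftrightarrow>
     length ws = n + 1 \<and> length bs = n \<and> ws ! 0 = x \<and> ws ! n = y \<and>
     (\<forall>k<n. qbg_edge R r alpha (Jset r alpha lam) (ws ! (k+1)) (bs ! k) (ws ! k) \<and>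
            \<sigma> * coroot_pair lam (bs ! k) \<in> \<int>)"

definition in_Bcl :: "'a::euclidean_space set \<Rightarrow> nat \<Rightarrow> (nat \<Rightarrow> 'a) \<Rightarrow> 'a \<Rightarrow>
    nat \<Rightarrow> (nat \<Rightarrow> ('a \<Rightarrow> 'a)) \<Rightarrow> (nat \<Rightarrow> rat) \<Rightarrow> bool" where
  "in_Bcl R r alpha lam s x \<sigma> \<longleftrightarrow>
     (\<forall>k\<in>{1..s}. x k \<in> minrep r alpha (Jset r alpha lam)) \<and>
     (\<forall>k\<in>{1..<s}. x k \<noteq> x (k+1)) \<and>
     \<sigma> 0 = 0 \<and> \<sigma> s = 1 \<and> (\<forall>k<s. \<sigma> k < \<sigma> (k+1)) \<and>
     (\<forall>k\<in>{1..<s}. \<exists>n ws bs. sigma_path R r alpha lam (of_rat (\<sigma> k)) (x (k+1)) (x k) n ws bs)"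

text \<open>The path eta(t) (in the level-zero weight space; cl identifies it with its finite part).\<close>
definition eta_at :: "'a::euclidean_space \<Rightarrow> nat \<Rightarrow> (nat \<Rightarrow> ('a \<Rightarrow> 'a)) \<Rightarrow> (nat \<Rightarrow> rat) \<Rightarrow> real \<Rightarrow> 'a" where
  "eta_at lam s x \<sigma> t =
     (let k = (LEAST k. 1 \<le> k \<and> t \<le> of_rat (\<sigma> k)) in
       (\<Sum>l\<in>{1..<k}. of_rat (\<sigma> l - \<sigma> (l-1)) *\<^sub>R x l lam) + (t - of_rat (\<sigma> (k-1))) *\<^sub>R x k lam)"

text \<open>\<langle>\<mu>, alpha_j^\<or>\<rangle> for j \<in> I = {0..r} and \<mu> of level zero; alpha_0^\<or> = -\<theta>^\<or> + c.\<close>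
definition pair_I :: "(nat \<Rightarrow> 'a::euclidean_space) \<Rightarrow> 'a \<Rightarrow> 'a \<Rightarrow> nat \<Rightarrow> real" where
  "pair_I alpha \<theta> \<mu> j = (if j = 0 then - coroot_pair \<mu> \<theta> else coroot_pair \<mu> (alpha j))"

definition H_eta :: "(nat \<Rightarrow> 'a::euclidean_space) \<Rightarrow> 'a \<Rightarrow> 'a \<Rightarrow> nat \<Rightarrow> (nat \<Rightarrow> ('a \<Rightarrow> 'a)) \<Rightarrow>
    (nat \<Rightarrow> rat) \<Rightarrow> nat \<Rightarrow> real \<Rightarrow> real" where
  "H_eta alpha \<theta> lam s x \<sigma> j t = pair_I alpha \<theta> (eta_at lam s x \<sigma> t) j"

end

theory Submission
  imports Defs
begin

text \<open>
  At the breakpoint \<open>\<sigma>\<^sub>u\<close>, \<open>H\<^sup>\<eta>\<^sub>j\<close> is, by summation by parts, \<open>\<sigma>\<^sub>u \<langle>x\<^sub>u\<Lambda>, \<alpha>\<^sub>j\<^sup>\<or>\<rangle>\<close> plus the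
  terms \<open>\<sigma>\<^sub>l \<langle>x\<^sub>l\<Lambda> - x\<^sub>l\<^sub>+\<^sub>1\<Lambda>, \<alpha>\<^sub>j\<^sup>\<or>\<rangle>\<close>, \<open>l < u\<close>. Along an edge \<open>w' \<leftarrow> w\<close> of a directed
  \<open>\<sigma>\<close>-path labelled \<open>\<beta>\<close>, \<open>w'\<Lambda> = r\<^bsub>w\<beta>\<^esub> (w\<Lambda>)\<close> differs from \<open>w\<Lambda>\<close> by \<open>\<langle>\<Lambda>, \<beta>\<^sup>\<or>\<rangle> w\<beta>\<close>,
  and \<open>\<sigma> \<langle>\<Lambda>, \<beta>\<^sup>\<or>\<rangle> \<in> \<int>\<close>; so all these terms are integers.

  For the remaining term, let \<open>w\<^sub>k\<close> be the last vertex of the \<open>\<sigma>\<^sub>u\<close>-path with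
  \<open>\<langle>w\<^sub>k\<Lambda>, \<alpha>\<^sub>j\<^sup>\<or>\<rangle> \<le> 0\<close>: the edge \<open>w\<^sub>k \<leftarrow> w\<^sub>k\<^sub>+\<^sub>1\<close> crosses the wall of \<open>\<alpha>\<^sub>j\<close>
  (whose classical part is \<open>-\<theta>\<close> for \<open>j = 0\<close>). The length of a minimal representative
  \<open>\<lfloor>w\<rfloor>\<close> is the number of positive roots \<open>\<gamma>\<close> with \<open>\<langle>w\<Lambda>, \<gamma>\<^sup>\<or>\<rangle> < 0\<close>, so the length
  condition of the quantum Bruhat graph can be compared root by root; after cancelling pairs
  exchanged by the reflection, it forces \<open>w\<^sub>k\<^sub>+\<^sub>1\<beta> = \<alpha>\<^sub>j\<close>. Hence
  \<open>\<langle>w\<^sub>k\<^sub>+\<^sub>1\<Lambda>, \<alpha>\<^sub>j\<^sup>\<or>\<rangle> = \<langle>\<Lambda>, \<beta>\<^sup>\<or>\<rangle>\<close>, and \<open>\<sigma>\<^sub>u\<close> times it is an integer.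
\<close>

section \<open>Coroot pairings and reflections\<close>

lemma coroot_pair_add: "coroot_pair (x + y) b = coroot_pair x b + coroot_pair y b"
  by (simp add: coroot_pair_def inner_add_left add_divide_distrib distrib_left)

lemma coroot_pair_scaleR: "coroot_pair (c *\<^sub>R x) b = c * coroot_pair x b"
  by (simp add: coroot_pair_def)

lemma coroot_pair_minus_left: "coroot_pair (- x) b = - coroot_pair x b"
  by (simp add: coroot_pair_def)

lemma coroot_pair_diff: "coroot_pair (x - y) b = coroot_pair x b - coroot_pair y b"
  by (simp add: coroot_pair_def inner_diff_left diff_divide_distrib right_diff_distrib)

lemma coroot_pair_minus_right: "coroot_pair x (- b) = - coroot_pair x b"
  by (simp add: coroot_pair_def)

lemma coroot_pair_self: "b \<noteq> 0 \<Longrightarrow> coroot_pair b b = 2"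
  by (simp add: coroot_pair_def)

lemma coroot_pair_sum:
  "finite S \<Longrightarrow> coroot_pair (\<Sum>x\<in>S. f x) b = (\<Sum>x\<in>S. coroot_pair (f x) b)"
  by (induction S rule: finite_induct) (simp add: coroot_pair_def, simp add: coroot_pair_add)

lemma coroot_pair_pos_commute:
  assumes "a \<noteq> 0" "b \<noteq> 0"
  shows "coroot_pair a b > 0 \<longleftrightarrow> coroot_pair b a > 0"
proof -
  have "\<not> a \<bullet> a < 0" "\<not> b \<bullet> b < 0" by (simp_all add: not_less)
  then show ?thesis
    using assms by (auto simp: coroot_pair_def zero_less_divide_iff inner_commute)
qed

lemma coroot_pair_neg_commute:
  assumes "a \<noteq> 0" "b \<noteq> 0"
  shows "coroot_pair a b < 0 \<longleftrightarrow> coroot_pair b a < 0"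
proof -
  have "\<not> a \<bullet> a < 0" "\<not> b \<bullet> b < 0" by (simp_all add: not_less)
  then show ?thesis
    using assms by (auto simp: coroot_pair_def divide_less_0_iff inner_commute)
qed

lemma orthogonal_transformation_coroot_pair:
  "orthogonal_transformation f \<Longrightarrow> coroot_pair (f x) (f b) = coroot_pair x b"
  by (simp add: orthogonal_transformation_def coroot_pair_def)

lemma linear_refl_v: "linear (refl_v b)"
  unfolding refl_v_def coroot_pair_def
  by (rule linearI) (auto simp: inner_add_left algebra_simps add_divide_distrib)

lemma orthogonal_transformation_refl_v:
  assumes "b \<noteq> 0"
  shows "orthogonal_transformation (refl_v b)"
proof -
  have "refl_v b x \<bullet> refl_v b y = x \<bullet> y" for x y
    using assms unfolding refl_v_def coroot_pair_def
    by (simp add: inner_diff_left inner_diff_right inner_commute field_simps)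
  then show ?thesis
    using linear_refl_v by (simp add: orthogonal_transformation_def)
qed

lemma refl_v_refl_v: "b \<noteq> 0 \<Longrightarrow> refl_v b (refl_v b x) = x"
  by (simp add: refl_v_def coroot_pair_diff coroot_pair_scaleR coroot_pair_self algebra_simps)

lemma refl_v_comp_refl_v: "b \<noteq> 0 \<Longrightarrow> refl_v b \<circ> refl_v b = id"
  by (simp add: fun_eq_iff refl_v_refl_v)

lemma refl_v_self: "b \<noteq> 0 \<Longrightarrow> refl_v b b = - b"
  by (simp add: refl_v_def coroot_pair_self scaleR_2)

lemma refl_v_minus_root: "refl_v (- b) = refl_v b"
  by (simp add: fun_eq_iff refl_v_def coroot_pair_minus_right)

lemma refl_v_minus: "refl_v b (- x) = - refl_v b x"
  by (simp add: refl_v_def coroot_pair_minus_left)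

lemma refl_v_conj:
  "orthogonal_transformation f \<Longrightarrow> f (refl_v b x) = refl_v (f b) (f x)"
  by (simp add: refl_v_def linear_diff linear_scale orthogonal_transformation_linear
      orthogonal_transformation_coroot_pair)

lemma refl_v_comp_conj:
  assumes "orthogonal_transformation f" "f b = c"
  shows "f \<circ> refl_v b = refl_v c \<circ> f"
  using refl_v_conj[OF assms(1)] assms(2) by (simp add: fun_eq_iff)

lemma refl_v_conj_refl_v:
  assumes "a \<noteq> 0"
  shows "refl_v b = refl_v a \<circ> refl_v (refl_v a b) \<circ> refl_v a"
  using refl_v_conj[OF orthogonal_transformation_refl_v[OF assms], symmetric]
  by (simp add: fun_eq_iff refl_v_refl_v[OF assms])

lemma coroot_pair_refl_v_swap:
  assumes "b \<noteq> 0"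
  shows "coroot_pair (refl_v b x) y = coroot_pair x (refl_v b y)"
  using orthogonal_transformation_coroot_pair[OF orthogonal_transformation_refl_v[OF assms],
      of "refl_v b x" y]
  by (simp add: refl_v_refl_v[OF assms])

lemma coroot_pair_refl_v_root: "b \<noteq> 0 \<Longrightarrow> coroot_pair (refl_v b x) b = - coroot_pair x b"
  by (simp add: refl_v_def coroot_pair_diff coroot_pair_scaleR coroot_pair_self)

lemma coroot_pair_refl_v_left:
  "coroot_pair (refl_v g \<mu>) a = coroot_pair \<mu> a - coroot_pair \<mu> g * coroot_pair g a"
  by (simp add: refl_v_def coroot_pair_diff coroot_pair_scaleR)

section \<open>Values of a path at its breakpoints\<close>

lemma less_by_Suc_steps:
  fixes f :: "nat \<Rightarrow> 'b::order"
  assumes step: "\<And>k. k < s \<Longrightarrow> f k < f (Suc k)" and "k < l" "l \<le> s"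
  shows "f k < f l"
  using assms(2,3)
proof (induction l)
  case (Suc l)
  then show ?case
    using step[of l] by (cases "k = l") (auto intro: less_trans)
qed simp

lemma summation_by_parts:
  fixes s p :: "nat \<Rightarrow> real"
  assumes "s 0 = 0" "1 \<le> u"
  shows "(\<Sum>l\<in>{1..<u}. (s l - s (l - 1)) * p l) + (s u - s (u - 1)) * p u
    = s u * p u + (\<Sum>l\<in>{1..<u}. s l * (p l - p (Suc l)))"
  using assms(2)
proof (induction u rule: nat_induct_at_least)
  case base
  then show ?case
    using assms(1) by simp
next
  case (Suc u)
  then show ?case
    by (simp add: algebra_simps)
qed

lemma pair_I_eq: "pair_I alpha \<theta> \<mu> j = coroot_pair \<mu> (if j = 0 then - \<theta> else alpha j)"
  by (simp add: pair_I_def coroot_pair_minus_right)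

lemma H_eta_at_breakpoint:
  assumes \<sigma>0: "\<sigma> 0 = 0" and mono: "\<And>k. k < s \<Longrightarrow> \<sigma> k < \<sigma> (Suc k)"
    and u: "1 \<le> u" "u \<le> s"
  shows "H_eta alpha \<theta> lam s x \<sigma> j (of_rat (\<sigma> u))
    = of_rat (\<sigma> u) * pair_I alpha \<theta> (x u lam) j
      + (\<Sum>l\<in>{1..<u}. of_rat (\<sigma> l) * (pair_I alpha \<theta> (x l lam) j - pair_I alpha \<theta> (x (Suc l) lam) j))"
proof -
  define p where "p l = pair_I alpha \<theta> (x l lam) j" for l
  have "(LEAST k. 1 \<le> k \<and> (of_rat (\<sigma> u) :: real) \<le> of_rat (\<sigma> k)) = u"
  proof (rule Least_equality)
    fix k assume k: "1 \<le> k \<and> (of_rat (\<sigma> u) :: real) \<le> of_rat (\<sigma> k)"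
    show "u \<le> k"
    proof (rule ccontr)
      assume "\<not> u \<le> k"
      then have "\<sigma> k < \<sigma> u"
        using less_by_Suc_steps[where f = \<sigma>, OF mono] u(2) by simp
      moreover have "\<sigma> u \<le> \<sigma> k"
        using k by (simp add: of_rat_less_eq)
      ultimately show False
        by linarith
    qed
  qed (use u in simp)
  then have "H_eta alpha \<theta> lam s x \<sigma> j (of_rat (\<sigma> u))
      = (\<Sum>l\<in>{1..<u}. (of_rat (\<sigma> l) - of_rat (\<sigma> (l - 1))) * p l)
        + (of_rat (\<sigma> u) - of_rat (\<sigma> (u - 1))) * p u"
    by (simp add: H_eta_def eta_at_def pair_I_eq p_def coroot_pair_add coroot_pair_sum
        coroot_pair_scaleR of_rat_diff)
  also have "\<dots> = of_rat (\<sigma> u) * p u + (\<Sum>l\<in>{1..<u}. of_rat (\<sigma> l) * (p l - p (Suc l)))"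
    using summation_by_parts[of "\<lambda>l. of_rat (\<sigma> l)" u p] \<sigma>0 u(1) by simp
  finally show ?thesis
    by (simp add: p_def)
qed

section \<open>Root systems with a base\<close>

locale based_root_system =
  fixes R :: "'a::euclidean_space set" and r :: nat and alpha :: "nat \<Rightarrow> 'a"
  assumes root_system: "root_system R" and simple_system: "simple_system R r alpha"
begin

abbreviation "NC \<equiv> nonneg_comb r alpha"

lemma finite_roots: "finite R"
  and zero_notin_roots: "0 \<notin> R"
  and refl_v_root: "a \<in> R \<Longrightarrow> b \<in> R \<Longrightarrow> refl_v a b \<in> R"
  and coroot_pair_roots_Ints: "a \<in> R \<Longrightarrow> b \<in> R \<Longrightarrow> coroot_pair b a \<in> \<int>"
  and roots_reduced: "a \<in> R \<Longrightarrow> c *\<^sub>R a \<in> R \<Longrightarrow> c = 1 \<or> c = -1"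
  using root_system unfolding root_system_def by auto

lemma simple_root: "i \<in> {1..r} \<Longrightarrow> alpha i \<in> R"
  and inj_on_simple_roots: "inj_on alpha {1..r}"
  and independent_simple_roots: "independent (alpha ` {1..r})"
  and root_pos_or_neg: "b \<in> R \<Longrightarrow> b \<in> NC \<or> - b \<in> NC"
  using simple_system unfolding simple_system_def by auto

lemma root_nonzero: "b \<in> R \<Longrightarrow> b \<noteq> 0"
  using zero_notin_roots by auto

lemma simple_root_nonzero: "i \<in> {1..r} \<Longrightarrow> alpha i \<noteq> 0"
  using simple_root root_nonzero by blast

lemma minus_root: "b \<in> R \<Longrightarrow> - b \<in> R"
  using refl_v_root[of b b] refl_v_self[OF root_nonzero] by auto

lemma simple_coeffs_zero:
  assumes "(\<Sum>i=1..r. a i *\<^sub>R alpha i) = 0" "i \<in> {1..r}"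
  shows "a i = 0"
proof -
  let ?B = "alpha ` {1..r}"
  let ?u = "\<lambda>v. a (the_inv_into {1..r} alpha v)"
  have "(\<Sum>v\<in>?B. ?u v *\<^sub>R v) = (\<Sum>i\<in>{1..r}. ?u (alpha i) *\<^sub>R alpha i)"
    using sum.reindex[OF inj_on_simple_roots, of "\<lambda>v. ?u v *\<^sub>R v"] by (simp add: o_def)
  also have "\<dots> = (\<Sum>i=1..r. a i *\<^sub>R alpha i)"
    by (intro sum.cong refl) (metis the_inv_into_f_f[OF inj_on_simple_roots])
  finally have sum0: "(\<Sum>v\<in>?B. ?u v *\<^sub>R v) = 0"
    using assms(1) by simp
  have "\<And>u v. (\<Sum>v\<in>?B. u v *\<^sub>R v) = 0 \<Longrightarrow> v \<in> ?B \<Longrightarrow> u v = 0"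
    using independent_simple_roots unfolding real_vector.independent_explicit_module by blast
  from this[OF sum0] have "?u (alpha i) = 0"
    using assms(2) by blast
  then show ?thesis
    using the_inv_into_f_f[OF inj_on_simple_roots assms(2)] by simp
qed

lemma simple_coeffs_unique:
  assumes "(\<Sum>i=1..r. a i *\<^sub>R alpha i) = (\<Sum>i=1..r. b i *\<^sub>R alpha i)" "i \<in> {1..r}"
  shows "a i = b i"
proof -
  have "(\<Sum>i=1..r. (a i - b i) *\<^sub>R alpha i) = 0"
    using assms(1) by (simp add: scaleR_diff_left sum_subtractf)
  from simple_coeffs_zero[OF this assms(2)] show ?thesis by simp
qed

lemma sum_simple_delta:
  assumes "i \<in> {1..r}"
  shows "(\<Sum>k=1..r. (if k = i then t else 0) *\<^sub>R alpha k) = t *\<^sub>R alpha i"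
proof -
  have "(\<Sum>k=1..r. (if k = i then t else 0) *\<^sub>R alpha k)
      = (\<Sum>k\<in>{1..r}. if k = i then t *\<^sub>R alpha k else 0)"
    by (rule sum.cong) auto
  also have "\<dots> = t *\<^sub>R alpha i"
    using assms by (simp add: sum.delta')
  finally show ?thesis .
qed

lemma NC_zero: "0 \<in> NC"
  unfolding nonneg_comb_def by (rule CollectI, rule exI[of _ "\<lambda>i. 0"]) simp

lemma NC_add: "x \<in> NC \<Longrightarrow> y \<in> NC \<Longrightarrow> x + y \<in> NC"
  unfolding nonneg_comb_def
proof clarify
  fix c d :: "nat \<Rightarrow> nat"
  show "\<exists>e. (\<Sum>i=1..r. real (c i) *\<^sub>R alpha i) + (\<Sum>i=1..r. real (d i) *\<^sub>R alpha i)
      = (\<Sum>i=1..r. real (e i) *\<^sub>R alpha i)"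
    by (rule exI[of _ "\<lambda>i. c i + d i"]) (simp add: sum.distrib scaleR_add_left)
qed

lemma NC_scaleR: "x \<in> NC \<Longrightarrow> real n *\<^sub>R x \<in> NC"
  unfolding nonneg_comb_def
proof clarify
  fix c :: "nat \<Rightarrow> nat"
  show "\<exists>e. real n *\<^sub>R (\<Sum>i=1..r. real (c i) *\<^sub>R alpha i) = (\<Sum>i=1..r. real (e i) *\<^sub>R alpha i)"
    by (rule exI[of _ "\<lambda>i. n * c i"]) (simp add: scaleR_sum_right)
qed

lemma NC_sum: "finite S \<Longrightarrow> (\<And>x. x \<in> S \<Longrightarrow> f x \<in> NC) \<Longrightarrow> (\<Sum>x\<in>S. f x) \<in> NC"
  by (induction S rule: finite_induct) (auto simp: NC_zero NC_add)

lemma NC_simple_root: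
  assumes "i \<in> {1..r}"
  shows "alpha i \<in> NC"
  unfolding nonneg_comb_def
proof (rule CollectI, rule exI[of _ "\<lambda>k. if k = i then 1 else 0"])
  show "alpha i = (\<Sum>k=1..r. real (if k = i then 1 else 0) *\<^sub>R alpha k)"
    using sum_simple_delta[OF assms, of 1] by (simp add: if_distrib cong: if_cong)
qed

lemma NC_antisym:
  assumes "x \<in> NC" "- x \<in> NC"
  shows "x = 0"
proof -
  obtain c d :: "nat \<Rightarrow> nat" where c: "x = (\<Sum>i=1..r. real (c i) *\<^sub>R alpha i)"
    and d: "- x = (\<Sum>i=1..r. real (d i) *\<^sub>R alpha i)"
    using assms unfolding nonneg_comb_def by blast
  have "(\<Sum>i=1..r. (real (c i) + real (d i)) *\<^sub>R alpha i) = 0"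
    unfolding scaleR_add_left sum.distrib by (simp only: c[symmetric] d[symmetric] add.right_inverse)
  then have "\<forall>i\<in>{1..r}. real (c i) + real (d i) = 0"
    using simple_coeffs_zero[of "\<lambda>i. real (c i) + real (d i)"] by blast
  then have "\<forall>i\<in>{1..r}. c i = 0"
    by auto
  then show ?thesis
    using c by simp
qed

lemma root_not_pos_and_neg: "b \<in> R \<Longrightarrow> b \<in> NC \<Longrightarrow> - b \<in> NC \<Longrightarrow> False"
  using NC_antisym zero_notin_roots by blast

lemma refl_simple_pos_root:
  assumes i: "i \<in> {1..r}" and b: "b \<in> R" "b \<in> NC" and ne: "b \<noteq> alpha i"
  shows "refl_v (alpha i) b \<in> NC"
proof (rule ccontr)
  let ?t = "coroot_pair b (alpha i)"
  assume "refl_v (alpha i) b \<notin> NC"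
  then have "- refl_v (alpha i) b \<in> NC"
    using root_pos_or_neg refl_v_root simple_root i b by blast
  then obtain d :: "nat \<Rightarrow> nat"
    where d: "- refl_v (alpha i) b = (\<Sum>k=1..r. real (d k) *\<^sub>R alpha k)"
    unfolding nonneg_comb_def by blast
  obtain c :: "nat \<Rightarrow> nat" where c: "b = (\<Sum>k=1..r. real (c k) *\<^sub>R alpha k)"
    using b unfolding nonneg_comb_def by blast
  have "\<exists>k\<in>{1..r}. k \<noteq> i \<and> c k > 0"
  proof (rule ccontr)
    assume "\<not> ?thesis"
    then have z: "\<forall>k\<in>{1..r}. k \<noteq> i \<longrightarrow> c k = 0" by auto
    have "b = (\<Sum>k=1..r. (if k = i then real (c i) else 0) *\<^sub>R alpha k)"
      unfolding c by (rule sum.cong) (use z in auto)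
    then have bi: "b = real (c i) *\<^sub>R alpha i"
      using sum_simple_delta[OF i] by simp
    then have "real (c i) = 1"
      using roots_reduced[OF simple_root[OF i], of "real (c i)"] b(1) by auto
    then show False
      using bi ne by simp
  qed
  then obtain k where k: "k \<in> {1..r}" "k \<noteq> i" "c k > 0" by blast
  \<comment> \<open>\<open>b - s\<^sub>i b = t \<alpha>\<^sub>i\<close>, yet \<open>b\<close> and \<open>- s\<^sub>i b\<close> both have a positive coefficient at \<open>\<alpha>\<^sub>k\<close>, \<open>k \<noteq> i\<close>.\<close>
  have "(\<Sum>k=1..r. (real (c k) + real (d k) - (if k = i then ?t else 0)) *\<^sub>R alpha k)
      = (\<Sum>k=1..r. real (c k) *\<^sub>R alpha k) + (\<Sum>k=1..r. real (d k) *\<^sub>R alpha k)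
        - (\<Sum>k=1..r. (if k = i then ?t else 0) *\<^sub>R alpha k)"
    by (simp only: scaleR_add_left scaleR_diff_left sum.distrib sum_subtractf)
  also have "\<dots> = b + (- refl_v (alpha i) b) - ?t *\<^sub>R alpha i"
    by (simp only: c[symmetric] d[symmetric] sum_simple_delta[OF i])
  also have "\<dots> = 0"
    by (simp add: refl_v_def)
  finally have "(\<Sum>k=1..r. (real (c k) + real (d k) - (if k = i then ?t else 0)) *\<^sub>R alpha k) = 0" .
  from simple_coeffs_zero[OF this k(1)] k show False
    by simp
qed

lemma refl_simple_neg_root_eq:
  assumes i: "i \<in> {1..r}" and b: "b \<in> R" "b \<in> NC" and neg: "- refl_v (alpha i) b \<in> NC"
  shows "b = alpha i"
  using refl_simple_pos_root[OF i b] root_not_pos_and_neg[OF refl_v_root[OF simple_root[OF i] b(1)]]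
    neg by blast

lemma wprod_Nil [simp]: "wprod alpha [] = id"
  by (simp add: wprod_def)

lemma wprod_Cons [simp]: "wprod alpha (i # is) = refl_v (alpha i) \<circ> wprod alpha is"
  by (simp add: wprod_def)

lemma wprod_append: "wprod alpha (is @ js) = wprod alpha is \<circ> wprod alpha js"
  by (induction "is") auto

lemma orthogonal_transformation_wprod:
  "set is \<subseteq> {1..r} \<Longrightarrow> orthogonal_transformation (wprod alpha is)"
  by (induction "is")
    (auto simp: id_def
      intro!: orthogonal_transformation_compose orthogonal_transformation_refl_v simple_root_nonzero)

lemma wprod_root: "set is \<subseteq> {1..r} \<Longrightarrow> b \<in> R \<Longrightarrow> wprod alpha is b \<in> R"
  by (induction "is") (auto intro!: refl_v_root simple_root)

lemma wprod_rev_comp: "set is \<subseteq> {1..r} \<Longrightarrow> wprod alpha (rev is) \<circ> wprod alpha is = id"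
proof (induction "is")
  case (Cons i "is")
  have "wprod alpha (rev (i # is)) \<circ> wprod alpha (i # is)
      = wprod alpha (rev is) \<circ> (refl_v (alpha i) \<circ> refl_v (alpha i)) \<circ> wprod alpha is"
    by (simp add: wprod_append comp_assoc)
  also have "\<dots> = wprod alpha (rev is) \<circ> wprod alpha is"
    using Cons.prems by (simp add: refl_v_comp_refl_v simple_root_nonzero)
  also have "\<dots> = id"
    by (rule Cons.IH) (use Cons.prems in simp)
  finally show ?case .
qed simp

lemma wprod_comp_rev: "set is \<subseteq> {1..r} \<Longrightarrow> wprod alpha is \<circ> wprod alpha (rev is) = id"
  using wprod_rev_comp[of "rev is"] by simp

lemma weyl_gen_iff: "x \<in> weyl_gen alpha K \<longleftrightarrow> (\<exists>is. set is \<subseteq> K \<and> x = wprod alpha is)"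
  by (auto simp: weyl_gen_def)

lemma wlen_wprod_le: "set is \<subseteq> {1..r} \<Longrightarrow> wlen r alpha (wprod alpha is) \<le> length is"
  unfolding wlen_def by (rule Least_le) blast

lemma reduced_word_exists:
  assumes "x \<in> weyl_gen alpha {1..r}"
  obtains "is" where "set is \<subseteq> {1..r}" "length is = wlen r alpha x" "wprod alpha is = x"
proof -
  obtain ks where "set ks \<subseteq> {1..r}" "x = wprod alpha ks"
    using assms weyl_gen_iff by blast
  then have "\<exists>n is. set is \<subseteq> {1..r} \<and> length is = n \<and> wprod alpha is = x"
    by blast
  from LeastI_ex[OF this] show ?thesis
    using that unfolding wlen_def by blast
qed

lemma exchange_right:
  assumes "set is \<subseteq> {1..r}" "i \<in> {1..r}" "- wprod alpha is (alpha i) \<in> NC"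
  obtains js where "set js \<subseteq> {1..r}" "length js + 1 = length is"
    "wprod alpha js = wprod alpha is \<circ> refl_v (alpha i)"
  using assms
proof (induction "is" arbitrary: thesis)
  case Nil
  then show ?case
    using root_not_pos_and_neg[OF simple_root NC_simple_root] by auto
next
  case (Cons i1 "is")
  let ?x = "wprod alpha is"
  have is1: "set is \<subseteq> {1..r}" "i1 \<in> {1..r}"
    using Cons.prems by auto
  show ?case
  proof (cases "- ?x (alpha i) \<in> NC")
    case True
    with Cons.IH[OF _ is1(1) \<open>i \<in> {1..r}\<close>] obtain js where js: "set js \<subseteq> {1..r}"
      "length js + 1 = length is" "wprod alpha js = ?x \<circ> refl_v (alpha i)"
      by blast
    show ?thesis
      by (rule Cons.prems(1)[of "i1 # js"]) (use js is1 in \<open>auto simp: comp_assoc\<close>)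
  next
    case False
    have xR: "?x (alpha i) \<in> R"
      using wprod_root is1 simple_root Cons.prems by blast
    then have "?x (alpha i) \<in> NC"
      using root_pos_or_neg False by blast
    moreover have "- refl_v (alpha i1) (?x (alpha i)) \<in> NC"
      using Cons.prems by simp
    ultimately have "?x (alpha i) = alpha i1"
      by (rule refl_simple_neg_root_eq[OF is1(2) xR])
    then have "?x \<circ> refl_v (alpha i) = refl_v (alpha i1) \<circ> ?x"
      by (rule refl_v_comp_conj[OF orthogonal_transformation_wprod[OF is1(1)]])
    then have "wprod alpha (i1 # is) \<circ> refl_v (alpha i)
        = (refl_v (alpha i1) \<circ> refl_v (alpha i1)) \<circ> ?x"
      by (simp add: comp_assoc)
    also have "\<dots> = ?x"
      by (simp add: refl_v_comp_refl_v[OF simple_root_nonzero[OF is1(2)]])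
    finally have "wprod alpha (i1 # is) \<circ> refl_v (alpha i) = ?x" .
    from Cons.prems(1)[of "is", OF is1(1) _ this[symmetric]] show ?thesis
      by simp
  qed
qed

lemma exchange_left:
  assumes "set is \<subseteq> {1..r}" "i \<in> {1..r}" "- wprod alpha (rev is) (alpha i) \<in> NC"
  obtains js where "set js \<subseteq> {1..r}" "length js + 1 = length is"
    "wprod alpha js = refl_v (alpha i) \<circ> wprod alpha is"
proof -
  let ?a = "wprod alpha (rev is)" and ?b = "wprod alpha is" and ?s = "refl_v (alpha i)"
  obtain js where js: "set js \<subseteq> {1..r}" "length js + 1 = length is"
    "wprod alpha js = ?a \<circ> ?s"
    using exchange_right[of "rev is" i] assms by auto
  have "?a \<circ> ?s \<circ> (?s \<circ> ?b) = ?a \<circ> (?s \<circ> ?s) \<circ> ?b"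
    by (simp only: comp_assoc)
  also have "\<dots> = id"
    using wprod_rev_comp[OF assms(1)]
    by (simp add: refl_v_comp_refl_v[OF simple_root_nonzero[OF assms(2)]])
  finally have inv: "?a \<circ> ?s \<circ> (?s \<circ> ?b) = id" .
  have "wprod alpha (rev js) = wprod alpha (rev js) \<circ> (?a \<circ> ?s \<circ> (?s \<circ> ?b))"
    by (simp only: inv comp_id)
  also have "\<dots> = (wprod alpha (rev js) \<circ> wprod alpha js) \<circ> (?s \<circ> ?b)"
    by (simp only: js(3) comp_assoc)
  also have "\<dots> = ?s \<circ> ?b"
    by (simp only: wprod_rev_comp[OF js(1)] id_comp)
  finally show ?thesis
    using that[of "rev js"] js by simp
qed

lemma weyl_gen_comp: "x \<in> weyl_gen alpha K \<Longrightarrow> y \<in> weyl_gen alpha K \<Longrightarrow> x \<circ> y \<in> weyl_gen alpha K"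
  unfolding weyl_gen_iff by (metis set_append Un_least wprod_append)

lemma id_in_weyl_gen: "id \<in> weyl_gen alpha K"
  unfolding weyl_gen_iff by (rule exI[of _ "[]"]) simp

lemma simple_refl_in_weyl_gen: "i \<in> K \<Longrightarrow> refl_v (alpha i) \<in> weyl_gen alpha K"
  unfolding weyl_gen_iff by (rule exI[of _ "[i]"]) simp

lemma weyl_gen_mono: "K \<subseteq> L \<Longrightarrow> x \<in> weyl_gen alpha K \<Longrightarrow> x \<in> weyl_gen alpha L"
  unfolding weyl_gen_iff by blast

lemma weyl_gen_inverse:
  assumes "K \<subseteq> {1..r}" "x \<in> weyl_gen alpha K"
  obtains y where "y \<in> weyl_gen alpha K" "y \<circ> x = id" "x \<circ> y = id"
proof -
  obtain ks where ks: "set ks \<subseteq> K" "x = wprod alpha ks"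
    using assms weyl_gen_iff by blast
  then have "wprod alpha (rev ks) \<in> weyl_gen alpha K"
    unfolding weyl_gen_iff by (intro exI[of _ "rev ks"]) simp
  then show ?thesis
    using that ks assms(1) wprod_rev_comp wprod_comp_rev by blast
qed

lemma orthogonal_transformation_weyl_gen:
  "K \<subseteq> {1..r} \<Longrightarrow> x \<in> weyl_gen alpha K \<Longrightarrow> orthogonal_transformation x"
  unfolding weyl_gen_iff using orthogonal_transformation_wprod by blast

lemma weyl_gen_root: "K \<subseteq> {1..r} \<Longrightarrow> x \<in> weyl_gen alpha K \<Longrightarrow> b \<in> R \<Longrightarrow> x b \<in> R"
  unfolding weyl_gen_iff using wprod_root by blast

lemma refl_simple_coeffs:
  assumes "i \<in> {1..r}" "b = (\<Sum>k=1..r. a k *\<^sub>R alpha k)"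
  shows "refl_v (alpha i) b
    = (\<Sum>k=1..r. (a k - (if k = i then coroot_pair b (alpha i) else 0)) *\<^sub>R alpha k)"
  by (simp only: refl_v_def assms(2)[symmetric] scaleR_diff_left sum_subtractf
      sum_simple_delta[OF assms(1)])

lemma refl_simple_pos_root_coeffs:
  assumes i: "i \<in> {1..r}" and b: "b \<in> R" "b = (\<Sum>k=1..r. real (c k) *\<^sub>R alpha k)"
    and ne: "b \<noteq> alpha i"
  obtains c' where "refl_v (alpha i) b = (\<Sum>k=1..r. real (c' k) *\<^sub>R alpha k)"
    "\<And>k. k \<in> {1..r} \<Longrightarrow> real (c' k) = real (c k) - (if k = i then coroot_pair b (alpha i) else 0)"
proof -
  have "refl_v (alpha i) b \<in> NC"
    using refl_simple_pos_root[OF i b(1) _ ne] b(2) unfolding nonneg_comb_def by blast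
  then obtain c' :: "nat \<Rightarrow> nat" where c': "refl_v (alpha i) b = (\<Sum>k=1..r. real (c' k) *\<^sub>R alpha k)"
    unfolding nonneg_comb_def by blast
  show ?thesis
    using that[OF c']
      simple_coeffs_unique[OF c'[symmetric, THEN trans, OF refl_simple_coeffs[OF i b(2)]]]
    by blast
qed

lemma pos_root_has_acute_simple_root:
  assumes "b \<in> R" "b = (\<Sum>i=1..r. real (c i) *\<^sub>R alpha i)"
  obtains i where "i \<in> {1..r}" "c i > 0" "coroot_pair b (alpha i) > 0"
proof -
  have "0 < b \<bullet> b"
    using root_nonzero[OF assms(1)] by simp
  also have "b \<bullet> b = (\<Sum>i=1..r. real (c i) * (b \<bullet> alpha i))"
    by (subst (2) assms(2)) (simp add: inner_sum_right)
  finally obtain i where i: "i \<in> {1..r}" "0 < real (c i) * (b \<bullet> alpha i)"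
    by (metis (no_types, lifting) not_le sum_nonpos)
  then have "c i > 0" "b \<bullet> alpha i > 0"
    by (auto simp: zero_less_mult_iff)
  then show ?thesis
    using that i(1) simple_root_nonzero[OF i(1)] by (simp add: coroot_pair_def)
qed

lemma refl_v_in_weyl_gen_support:
  assumes K: "K \<subseteq> {1..r}" and b: "b \<in> R" "b = (\<Sum>i=1..r. real (c i) *\<^sub>R alpha i)"
    and supp: "\<forall>i\<in>{1..r}. i \<notin> K \<longrightarrow> c i = 0"
  shows "refl_v b \<in> weyl_gen alpha K"
  using b supp
proof (induction "sum c {1..r}" arbitrary: b c rule: less_induct)
  case less
  obtain i where i: "i \<in> {1..r}" "c i > 0" "coroot_pair b (alpha i) > 0"
    using pos_root_has_acute_simple_root[OF less.prems(1,2)] .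
  have iK: "i \<in> K"
    using less.prems(3) i by (metis not_gr_zero)
  show ?case
  proof (cases "b = alpha i")
    case True
    then show ?thesis
      using simple_refl_in_weyl_gen[OF iK] by simp
  next
    case False
    let ?b' = "refl_v (alpha i) b" and ?m = "coroot_pair b (alpha i)"
    \<comment> \<open>\<open>s\<^sub>i b\<close> is a positive root of smaller height, and \<open>r\<^sub>b = s\<^sub>i r\<^sub>s\<^sub>i\<^sub>b s\<^sub>i\<close>.\<close>
    have b'R: "?b' \<in> R"
      using refl_v_root simple_root i less.prems(1) by blast
    obtain c' where c': "?b' = (\<Sum>k=1..r. real (c' k) *\<^sub>R alpha k)"
      and cc: "\<And>k. k \<in> {1..r} \<Longrightarrow> real (c' k) = real (c k) - (if k = i then ?m else 0)"
      using refl_simple_pos_root_coeffs[OF i(1) less.prems(1,2) False] by blast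
    have "real (sum c' {1..r}) = real (sum c {1..r}) - ?m"
      using i(1) by (simp add: cc sum_subtractf)
    then have "sum c' {1..r} < sum c {1..r}"
      using i(3) by linarith
    moreover have "c' k = 0" if k: "k \<in> {1..r}" "k \<notin> K" for k
    proof -
      have "k \<noteq> i"
        using iK k(2) by blast
      then show ?thesis
        using cc[OF k(1)] less.prems(3) k by simp
    qed
    ultimately have "refl_v ?b' \<in> weyl_gen alpha K"
      using less.hyps b'R c' by blast
    then show ?thesis
      using refl_v_conj_refl_v[OF simple_root_nonzero[OF i(1)], of b]
        weyl_gen_comp simple_refl_in_weyl_gen[OF iK] by metis
  qed
qed

lemma refl_v_in_weyl_gen:
  assumes "b \<in> R"
  shows "refl_v b \<in> weyl_gen alpha {1..r}"
proof -
  have "refl_v b' \<in> weyl_gen alpha {1..r}" if b': "b' \<in> R" "b' \<in> NC" for b'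
  proof -
    obtain c where "b' = (\<Sum>i=1..r. real (c i) *\<^sub>R alpha i)"
      using b'(2) unfolding nonneg_comb_def by blast
    then show ?thesis
      using refl_v_in_weyl_gen_support[of "{1..r}" b' c] b'(1) by blast
  qed
  then show ?thesis
    using root_pos_or_neg[OF assms] minus_root[OF assms] assms refl_v_minus_root by metis
qed

lemma weyl_gen_keeps_coeff:
  assumes "set ks \<subseteq> K" "k \<notin> K" "K \<subseteq> {1..r}" "b = (\<Sum>i=1..r. a i *\<^sub>R alpha i)"
  shows "\<exists>a'. wprod alpha ks b = (\<Sum>i=1..r. a' i *\<^sub>R alpha i) \<and> a' k = a k"
  using assms
proof (induction ks)
  case (Cons j ks)
  then obtain a' where a': "wprod alpha ks b = (\<Sum>i=1..r. a' i *\<^sub>R alpha i)" "a' k = a k"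
    by auto
  have "j \<in> {1..r}" "j \<noteq> k"
    using Cons.prems by auto
  then show ?case
    using refl_simple_coeffs[OF _ a'(1)] a'(2) by auto
qed auto

lemma weyl_gen_pos_root:
  assumes K: "K \<subseteq> {1..r}" and v: "v \<in> weyl_gen alpha K"
    and b: "b \<in> R" "b = (\<Sum>i=1..r. real (c i) *\<^sub>R alpha i)"
    and k: "k \<in> {1..r}" "k \<notin> K" "c k > 0"
  shows "v b \<in> NC"
proof (rule ccontr)
  assume "v b \<notin> NC"
  then have "- v b \<in> NC"
    using root_pos_or_neg weyl_gen_root[OF K v b(1)] by blast
  then obtain d where d': "- v b = (\<Sum>i=1..r. real (d i) *\<^sub>R alpha i)"
    unfolding nonneg_comb_def by blast
  have d: "v b = (\<Sum>i=1..r. (- real (d i)) *\<^sub>R alpha i)"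
    unfolding scaleR_minus_left sum_negf d'[symmetric] by simp
  obtain ks where ks: "set ks \<subseteq> K" "v = wprod alpha ks"
    using v weyl_gen_iff by blast
  obtain a' where a': "v b = (\<Sum>i=1..r. a' i *\<^sub>R alpha i)" "a' k = real (c k)"
    using weyl_gen_keeps_coeff[OF ks(1) k(2) K b(2)] ks(2) by blast
  have "a' k = - real (d k)"
    using simple_coeffs_unique[OF trans[OF a'(1)[symmetric] d] k(1)] .
  then show False
    using a'(2) k(3) by simp
qed

lemma weyl_gen_eq_id_if_pos:
  assumes K: "K \<subseteq> {1..r}" and v: "v \<in> weyl_gen alpha K"
    and pos: "\<And>b. b \<in> R \<Longrightarrow> b \<in> NC \<Longrightarrow> v b \<in> NC"
  shows "v = id"
proof -
  obtain ks where ks: "set ks \<subseteq> {1..r}" "length ks = wlen r alpha v" "wprod alpha ks = v"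
    using reduced_word_exists[OF weyl_gen_mono[OF K v]] .
  show ?thesis
  proof (cases ks rule: rev_exhaust)
    case Nil
    then show ?thesis
      using ks by simp
  next
    case (snoc ks' i)
    have i: "i \<in> {1..r}" and ks': "set ks' \<subseteq> {1..r}"
      using ks snoc by auto
    have ve: "v = wprod alpha ks' \<circ> refl_v (alpha i)"
      using ks(3) snoc by (simp add: wprod_append)
    \<comment> \<open>Positivity of \<open>v \<alpha>\<^sub>i = -x' \<alpha>\<^sub>i\<close> lets the exchange condition shorten the reduced word.\<close>
    have "v (alpha i) = - wprod alpha ks' (alpha i)"
      using ve refl_v_self[OF simple_root_nonzero[OF i]]
        linear_neg[OF orthogonal_transformation_linear[OF orthogonal_transformation_wprod[OF ks']]]
      by simp
    then have "- wprod alpha ks' (alpha i) \<in> NC"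
      using pos[OF simple_root[OF i] NC_simple_root[OF i]] by simp
    then obtain js where js: "set js \<subseteq> {1..r}" "length js + 1 = length ks'"
      "wprod alpha js = wprod alpha ks' \<circ> refl_v (alpha i)"
      using exchange_right[OF ks' i] by metis
    then have "wlen r alpha v \<le> length js"
      using wlen_wprod_le[OF js(1)] ve by simp
    then show ?thesis
      using js(2) ks(2) snoc by simp
  qed
qed

lemma wlen_simple_descent:
  assumes z: "z \<in> weyl_gen alpha {1..r}" and i: "i \<in> {1..r}"
    and y: "y \<circ> z = id" and neg: "- y (alpha i) \<in> NC"
  shows "wlen r alpha (refl_v (alpha i) \<circ> z) + 1 \<le> wlen r alpha z"
proof -
  obtain zs where zs: "set zs \<subseteq> {1..r}" "length zs = wlen r alpha z" "wprod alpha zs = z"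
    using reduced_word_exists[OF z] .
  have "y = y \<circ> (z \<circ> wprod alpha (rev zs))"
    using wprod_comp_rev[OF zs(1)] zs(3) by simp
  also have "\<dots> = wprod alpha (rev zs)"
    using y by (simp add: comp_assoc[symmetric])
  finally obtain js where js: "set js \<subseteq> {1..r}" "length js + 1 = length zs"
    "wprod alpha js = refl_v (alpha i) \<circ> z"
    using exchange_left[OF zs(1) i] neg zs(3) by metis
  then show ?thesis
    using wlen_wprod_le[OF js(1)] zs(2) by simp
qed

subsection \<open>Counting roots made negative\<close>

definition neg_count :: "'a \<Rightarrow> nat" where
  "neg_count \<mu> = card {b\<in>R. b \<in> NC \<and> coroot_pair \<mu> b < 0}"

definition pos_pairing_roots :: "'a \<Rightarrow> 'a set" where
  "pos_pairing_roots \<mu> = {a\<in>R. coroot_pair \<mu> a > 0}"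

definition sign_change :: "'a \<Rightarrow> 'a \<Rightarrow> real" where
  "sign_change g a = (if - a \<in> NC then 1 else 0) - (if - refl_v g a \<in> NC then 1 else 0)"

lemma finite_pos_pairing_roots: "finite (pos_pairing_roots \<mu>)"
  using finite_roots by (simp add: pos_pairing_roots_def)

lemma neg_count_refl_simple_le:
  assumes i: "i \<in> {1..r}"
  shows "neg_count (refl_v (alpha i) \<mu>) \<le> neg_count \<mu> + 1"
proof -
  let ?s = "refl_v (alpha i)" and ?N = "{b\<in>R. b \<in> NC \<and> coroot_pair \<mu> b < 0}"
  have "{b\<in>R. b \<in> NC \<and> coroot_pair (?s \<mu>) b < 0} \<subseteq> insert (alpha i) (?s ` ?N)"
  proof
    fix b assume b: "b \<in> {b\<in>R. b \<in> NC \<and> coroot_pair (?s \<mu>) b < 0}"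
    show "b \<in> insert (alpha i) (?s ` ?N)"
    proof (cases "b = alpha i")
      case False
      have "?s b \<in> ?N"
        using refl_v_root simple_root i b refl_simple_pos_root[OF i _ _ False]
          coroot_pair_refl_v_swap[OF simple_root_nonzero[OF i]] by auto
      moreover have "b = ?s (?s b)"
        using refl_v_refl_v[OF simple_root_nonzero[OF i]] by simp
      ultimately show ?thesis
        by blast
    qed simp
  qed
  then have "neg_count (?s \<mu>) \<le> card (insert (alpha i) (?s ` ?N))"
    unfolding neg_count_def by (intro card_mono) (auto simp: finite_roots)
  also have "\<dots> \<le> card ?N + 1"
    using card_insert_le_m1[of "card ?N + 1" "?s ` ?N" "alpha i"] card_image_le[of ?N ?s]
      finite_roots by (simp add: card_insert_if)
  finally show ?thesis
    by (simp add: neg_count_def)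
qed

lemma card_eq_sum_indicator:
  "finite A \<Longrightarrow> real (card {x\<in>A. P x}) = (\<Sum>x\<in>A. if P x then 1 else 0)"
  by (simp add: sum.inter_filter[symmetric])

lemma neg_count_eq_sum:
  "real (neg_count \<mu>) = (\<Sum>a\<in>pos_pairing_roots \<mu>. if - a \<in> NC then 1 else 0)"
proof -
  have "{b\<in>R. b \<in> NC \<and> coroot_pair \<mu> b < 0} = uminus ` {a\<in>pos_pairing_roots \<mu>. - a \<in> NC}"
  proof (intro set_eqI iffI)
    fix b assume b: "b \<in> {b\<in>R. b \<in> NC \<and> coroot_pair \<mu> b < 0}"
    then have "- b \<in> R" "coroot_pair \<mu> (- b) > 0"
      using minus_root by (simp_all add: coroot_pair_minus_right)
    then have "- b \<in> {a\<in>pos_pairing_roots \<mu>. - a \<in> NC}"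
      using b by (simp add: pos_pairing_roots_def)
    then show "b \<in> uminus ` {a\<in>pos_pairing_roots \<mu>. - a \<in> NC}"
      by (rule image_eqI[rotated]) simp
  next
    fix b assume "b \<in> uminus ` {a\<in>pos_pairing_roots \<mu>. - a \<in> NC}"
    then obtain a where "a \<in> pos_pairing_roots \<mu>" "- a \<in> NC" "b = - a"
      by blast
    then show "b \<in> {b\<in>R. b \<in> NC \<and> coroot_pair \<mu> b < 0}"
      using minus_root by (simp add: pos_pairing_roots_def coroot_pair_minus_right)
  qed
  then have "neg_count \<mu> = card {a\<in>pos_pairing_roots \<mu>. - a \<in> NC}"
    unfolding neg_count_def by (simp add: card_image)
  then show ?thesis
    using card_eq_sum_indicator[OF finite_pos_pairing_roots] by simp
qed

lemma neg_count_refl_eq_sum: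
  assumes g: "g \<in> R"
  shows "real (neg_count (refl_v g \<mu>))
    = (\<Sum>a\<in>pos_pairing_roots \<mu>. if - refl_v g a \<in> NC then 1 else 0)"
proof -
  let ?s = "refl_v g" and ?A = "{a\<in>pos_pairing_roots \<mu>. - refl_v g a \<in> NC}"
  have gnz: "g \<noteq> 0"
    using root_nonzero g .
  have "{b\<in>R. b \<in> NC \<and> coroot_pair (?s \<mu>) b < 0} = (\<lambda>a. - ?s a) ` ?A"
  proof (intro set_eqI iffI)
    fix b assume b: "b \<in> {b\<in>R. b \<in> NC \<and> coroot_pair (?s \<mu>) b < 0}"
    have bb: "b = - ?s (- ?s b)"
      using refl_v_refl_v[OF gnz] by (simp add: refl_v_minus)
    have "- ?s b \<in> R"
      using b refl_v_root[OF g] minus_root by blast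
    moreover have "coroot_pair \<mu> (- ?s b) > 0"
      using b coroot_pair_refl_v_swap[OF gnz, of \<mu> b] by (simp add: coroot_pair_minus_right)
    ultimately have "- ?s b \<in> ?A"
      using b bb[symmetric] by (simp add: pos_pairing_roots_def)
    with bb show "b \<in> (\<lambda>a. - ?s a) ` ?A"
      by blast
  next
    fix b assume "b \<in> (\<lambda>a. - ?s a) ` ?A"
    then obtain a where a: "a \<in> R" "coroot_pair \<mu> a > 0" "- ?s a \<in> NC" "b = - ?s a"
      by (auto simp: pos_pairing_roots_def)
    have "b \<in> R"
      using a refl_v_root[OF g] minus_root by blast
    moreover have "coroot_pair (?s \<mu>) b < 0"
      using a coroot_pair_refl_v_swap[OF gnz, of \<mu> b] refl_v_refl_v[OF gnz]
      by (simp add: refl_v_minus coroot_pair_minus_right)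
    ultimately show "b \<in> {b\<in>R. b \<in> NC \<and> coroot_pair (?s \<mu>) b < 0}"
      using a by blast
  qed
  moreover have "inj (\<lambda>a. - ?s a)"
    using orthogonal_transformation_inj[OF orthogonal_transformation_refl_v[OF gnz]]
    by (simp add: inj_def)
  ultimately have "neg_count (?s \<mu>) = card ?A"
    unfolding neg_count_def by (simp only: card_image[OF inj_on_subset[OF _ subset_UNIV]])
  then show ?thesis
    using card_eq_sum_indicator[OF finite_pos_pairing_roots] by simp
qed

lemma neg_count_diff_eq_sum:
  assumes "g \<in> R"
  shows "real (neg_count \<mu>) - real (neg_count (refl_v g \<mu>))
    = (\<Sum>a\<in>pos_pairing_roots \<mu>. sign_change g a)"
  using neg_count_eq_sum[of \<mu>] neg_count_refl_eq_sum[OF assms, of \<mu>]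
  unfolding sign_change_def by (simp add: sum_subtractf)

text \<open>Sums over \<open>pos_pairing_roots \<mu>\<close> of functions that change sign under \<open>r\<^sub>g\<close> only see the
  \<open>surviving_roots\<close>: the roots \<open>a\<close> with \<open>\<langle>a, g\<^sup>\<or>\<rangle> < 0\<close> cancel against their images \<open>r\<^sub>g a\<close>.\<close>

definition cancelling_roots :: "'a \<Rightarrow> 'a \<Rightarrow> 'a set" where
  "cancelling_roots \<mu> g = {a\<in>pos_pairing_roots \<mu>. coroot_pair a g < 0}
     \<union> refl_v g ` {a\<in>pos_pairing_roots \<mu>. coroot_pair a g < 0}"

definition surviving_roots :: "'a \<Rightarrow> 'a \<Rightarrow> 'a set" where
  "surviving_roots \<mu> g = pos_pairing_roots \<mu> - cancelling_roots \<mu> g"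

lemma cancelling_roots_subset:
  assumes g: "g \<in> R" and k: "coroot_pair \<mu> g > 0"
  shows "cancelling_roots \<mu> g \<subseteq> pos_pairing_roots \<mu>"
proof
  fix x assume "x \<in> cancelling_roots \<mu> g"
  then consider "x \<in> pos_pairing_roots \<mu>"
    | a where "a \<in> R" "coroot_pair \<mu> a > 0" "coroot_pair a g < 0" "x = refl_v g a"
    by (auto simp: cancelling_roots_def pos_pairing_roots_def)
  then show "x \<in> pos_pairing_roots \<mu>"
  proof cases
    case 2
    have "coroot_pair g a < 0"
      using coroot_pair_neg_commute[OF root_nonzero[OF 2(1)] root_nonzero[OF g]] 2(3) by simp
    then have "coroot_pair \<mu> g * coroot_pair g a < 0"
      using k by (simp add: mult_pos_neg)
    then have "coroot_pair (refl_v g \<mu>) a > 0"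
      using 2(2) coroot_pair_refl_v_left[of g \<mu> a] by linarith
    then show ?thesis
      using 2 refl_v_root[OF g] coroot_pair_refl_v_swap[OF root_nonzero[OF g]]
      by (simp add: pos_pairing_roots_def)
  qed
qed

lemma refl_v_cancelling_roots:
  assumes "g \<in> R"
  shows "refl_v g ` cancelling_roots \<mu> g = cancelling_roots \<mu> g"
proof -
  have "refl_v g ` refl_v g ` A = A" for A
    using refl_v_refl_v[OF root_nonzero[OF assms]] by (force simp: image_image)
  then show ?thesis
    unfolding cancelling_roots_def by (auto simp: image_Un)
qed

lemma sum_pos_pairing_roots_eq_surviving:
  assumes g: "g \<in> R" and k: "coroot_pair \<mu> g > 0"
    and f: "\<And>a. f (refl_v g a) = - f a"
  shows "(\<Sum>a\<in>pos_pairing_roots \<mu>. f a) = (\<Sum>a\<in>surviving_roots \<mu> g. f a :: real)"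
proof -
  let ?S = "cancelling_roots \<mu> g"
  have "inj_on (refl_v g) ?S"
    using orthogonal_transformation_inj[OF orthogonal_transformation_refl_v[OF root_nonzero[OF g]]]
    by (simp add: inj_on_def inj_def)
  then have "sum f ?S = sum (f \<circ> refl_v g) ?S"
    using sum.reindex[of "refl_v g" ?S f] refl_v_cancelling_roots[OF g] by simp
  also have "\<dots> = - sum f ?S"
    by (simp add: f sum_negf)
  finally have "sum f ?S = 0"
    by simp
  moreover have "finite (pos_pairing_roots \<mu>)"
    by (rule finite_pos_pairing_roots)
  ultimately show ?thesis
    using cancelling_roots_subset[OF g k]
    by (simp add: surviving_roots_def sum.subset_diff[of ?S])
qed

lemma surviving_roots_acute:
  assumes "a \<in> surviving_roots \<mu> g"
  shows "a \<in> R" "coroot_pair a g \<ge> 0"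
  using assms by (auto simp: surviving_roots_def cancelling_roots_def pos_pairing_roots_def)

lemma root_in_surviving_roots:
  assumes g: "g \<in> R" and k: "coroot_pair \<mu> g > 0"
  shows "g \<in> surviving_roots \<mu> g"
proof -
  have "g \<noteq> refl_v g a" if "coroot_pair \<mu> a > 0" for a
  proof
    assume "g = refl_v g a"
    then have "a = - g"
      using refl_v_refl_v[OF root_nonzero[OF g]] refl_v_self[OF root_nonzero[OF g]] by metis
    then show False
      using that k by (simp add: coroot_pair_minus_right)
  qed
  then show ?thesis
    using g k coroot_pair_self[OF root_nonzero[OF g]]
    by (auto simp: surviving_roots_def cancelling_roots_def pos_pairing_roots_def)
qed

lemma surviving_rootsI:
  assumes g: "g \<in> R" and a: "a \<in> pos_pairing_roots \<mu>" "coroot_pair a g > 0"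
    "refl_v g a \<notin> pos_pairing_roots \<mu>"
  shows "a \<in> surviving_roots \<mu> g"
proof -
  have "a \<noteq> refl_v g b" if "b \<in> pos_pairing_roots \<mu>" for b
    using that a(3) refl_v_refl_v[OF root_nonzero[OF g]] by auto
  then show ?thesis
    using a by (auto simp: surviving_roots_def cancelling_roots_def)
qed

lemma sign_change_refl_v: "g \<noteq> 0 \<Longrightarrow> sign_change g (refl_v g a) = - sign_change g a"
  by (simp add: sign_change_def refl_v_refl_v)

lemma coroot_pair_nonneg_nat:
  assumes "a \<in> R" "g \<in> R" "coroot_pair a g \<ge> 0"
  obtains n :: nat where "coroot_pair a g = real n"
proof -
  obtain z :: int where z: "coroot_pair a g = of_int z"
    using coroot_pair_roots_Ints[OF assms(2,1)] Ints_cases by metis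
  then have "coroot_pair a g = real (nat z)"
    using assms(3) by simp
  then show ?thesis
    using that by blast
qed

lemma sign_change_le_1: "sign_change g a \<le> 1"
  by (simp add: sign_change_def)

lemma sign_change_le_coroot_pair:
  assumes "a \<in> R" "g \<in> R" "coroot_pair a g \<ge> 0"
  shows "sign_change g a \<le> coroot_pair a g"
proof (cases "coroot_pair a g = 0")
  case True
  then show ?thesis
    by (simp add: refl_v_def sign_change_def)
next
  case False
  obtain n :: nat where "coroot_pair a g = real n"
    using coroot_pair_nonneg_nat assms by blast
  then show ?thesis
    using False sign_change_le_1[of g a] by simp
qed

lemma sign_change_nonpos:
  assumes a: "a \<in> R" and g: "g \<in> R" "g \<in> NC" and c: "coroot_pair a g \<ge> 0"
  shows "sign_change g a \<le> 0"
proof (cases "- a \<in> NC")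
  case True
  obtain n :: nat where n: "coroot_pair a g = real n"
    using coroot_pair_nonneg_nat a g(1) c by blast
  have "- refl_v g a = - a + real n *\<^sub>R g"
    by (simp add: refl_v_def n)
  then have "- refl_v g a \<in> NC"
    using NC_add[OF True NC_scaleR[OF g(2)]] by simp
  then show ?thesis
    by (simp add: sign_change_def)
qed (simp add: sign_change_def)

lemma sign_change_nonneg:
  assumes a: "a \<in> R" and g: "g \<in> R" "- g \<in> NC" and c: "coroot_pair a g \<ge> 0"
  shows "sign_change g a \<ge> 0"
proof (cases "- a \<in> NC")
  case False
  then have "a \<in> NC"
    using root_pos_or_neg a by blast
  obtain n :: nat where n: "coroot_pair a g = real n"
    using coroot_pair_nonneg_nat a g(1) c by blast
  have "refl_v g a = a + real n *\<^sub>R (- g)"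
    by (simp add: refl_v_def n)
  then have "refl_v g a \<in> NC"
    using NC_add[OF \<open>a \<in> NC\<close> NC_scaleR[OF g(2)]] by simp
  then have "- refl_v g a \<notin> NC"
    using root_not_pos_and_neg refl_v_root[OF g(1) a] by blast
  then show ?thesis
    using False by (simp add: sign_change_def)
qed (auto simp: sign_change_def)

lemma sign_change_self:
  assumes "g \<in> R"
  shows "g \<in> NC \<Longrightarrow> sign_change g g = -1" "- g \<in> NC \<Longrightarrow> sign_change g g = 1"
  using root_not_pos_and_neg[OF assms] refl_v_self[OF root_nonzero[OF assms]]
  by (auto simp: sign_change_def)

lemma highest_root_in_roots: "highest_root R r alpha \<theta> \<Longrightarrow> \<theta> \<in> R \<and> \<theta> \<in> NC"
  by (simp add: highest_root_def pos_roots_def)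

lemma highest_root_dominant:
  assumes hr: "highest_root R r alpha \<theta>" and i: "i \<in> {1..r}"
  shows "coroot_pair \<theta> (alpha i) \<ge> 0"
proof (rule ccontr)
  assume "\<not> ?thesis"
  moreover obtain z :: int where z: "coroot_pair \<theta> (alpha i) = of_int z"
    using coroot_pair_roots_Ints[OF simple_root[OF i] highest_root_in_roots[OF hr, THEN conjunct1]]
      Ints_cases by metis
  ultimately have "coroot_pair \<theta> (alpha i) = - real (nat (- z)) \<and> nat (- z) > 0"
    by auto
  then obtain n :: nat where n: "coroot_pair \<theta> (alpha i) = - real n" "n > 0"
    by blast
  have e: "refl_v (alpha i) \<theta> = \<theta> + real n *\<^sub>R alpha i"
    using n by (simp add: refl_v_def)
  moreover have "refl_v (alpha i) \<theta> \<in> R"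
    using refl_v_root[OF simple_root[OF i]] highest_root_in_roots[OF hr] by blast
  ultimately have "refl_v (alpha i) \<theta> \<in> pos_roots R r alpha"
    using highest_root_in_roots[OF hr] NC_add[OF _ NC_scaleR[OF NC_simple_root[OF i]]]
    by (simp add: pos_roots_def)
  then have "\<theta> - refl_v (alpha i) \<theta> \<in> NC"
    using hr by (simp add: highest_root_def)
  then have "- (real n *\<^sub>R alpha i) \<in> NC"
    using e by simp
  then have "real n *\<^sub>R alpha i = 0"
    using NC_antisym NC_scaleR[OF NC_simple_root[OF i]] by blast
  then show False
    using n(2) simple_root_nonzero[OF i] by simp
qed

lemma highest_root_inner_nonneg:
  assumes hr: "highest_root R r alpha \<theta>" and g: "g \<in> NC"
  shows "\<theta> \<bullet> g \<ge> 0"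
proof -
  obtain c where c: "g = (\<Sum>i=1..r. real (c i) *\<^sub>R alpha i)"
    using g unfolding nonneg_comb_def by blast
  have "\<theta> \<bullet> alpha i \<ge> 0" if "i \<in> {1..r}" for i
  proof -
    have "alpha i \<bullet> alpha i > 0"
      using simple_root_nonzero[OF that] by simp
    moreover have "0 \<le> 2 * (\<theta> \<bullet> alpha i) / (alpha i \<bullet> alpha i)"
      using highest_root_dominant[OF hr that] by (simp add: coroot_pair_def)
    ultimately show ?thesis
      using zero_le_divide_iff[of "2 * (\<theta> \<bullet> alpha i)" "alpha i \<bullet> alpha i"] by linarith
  qed
  then show ?thesis
    unfolding c inner_sum_right inner_scaleR_right by (intro sum_nonneg mult_nonneg_nonneg) auto
qed

lemma simple_root_eq_if_diff_pos:
  assumes j: "j \<in> {1..r}" and g: "g \<in> R" "g \<in> NC" and t: "t > 0"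
    and diff: "alpha j - t *\<^sub>R g \<in> NC"
  shows "g = alpha j"
proof -
  obtain c where c: "g = (\<Sum>i=1..r. real (c i) *\<^sub>R alpha i)"
    using g unfolding nonneg_comb_def by blast
  obtain d where d: "alpha j - t *\<^sub>R g = (\<Sum>i=1..r. real (d i) *\<^sub>R alpha i)"
    using diff unfolding nonneg_comb_def by blast
  have eq: "alpha j - t *\<^sub>R g
      = (\<Sum>i=1..r. ((if i = j then 1 else 0) - t * real (c i)) *\<^sub>R alpha i)"
    unfolding c scaleR_diff_left sum_subtractf sum_simple_delta[OF j]
    by (simp add: scaleR_sum_right)
  have z: "c i = 0" if i: "i \<in> {1..r}" "i \<noteq> j" for i
  proof -
    have "real (d i) = - t * real (c i)"
      using simple_coeffs_unique[OF trans[OF d[symmetric] eq] i(1)] i(2) by simp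
    then have "t * real (c i) \<le> 0"
      by linarith
    then show ?thesis
      using t by (simp add: mult_le_0_iff)
  qed
  have "g = (\<Sum>i=1..r. (if i = j then real (c j) else 0) *\<^sub>R alpha i)"
    unfolding c by (rule sum.cong) (use z in auto)
  then have gj: "g = real (c j) *\<^sub>R alpha j"
    using sum_simple_delta[OF j] by simp
  then have "real (c j) = 1"
    using roots_reduced[OF simple_root[OF j], of "real (c j)"] g(1) by auto
  then show ?thesis
    using gj by simp
qed

text \<open>The classical parts \<open>cl(\<alpha>\<^sub>j)\<close> of the affine simple roots, \<open>j \<in> I\<close>; recall \<open>cl(\<alpha>\<^sub>0) = -\<theta>\<close>.\<close>

definition wall_roots :: "'a \<Rightarrow> 'a set" where
  "wall_roots \<theta> = insert (- \<theta>) (alpha ` {1..r})"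

lemma wall_roots_subset: "highest_root R r alpha \<theta> \<Longrightarrow> wall_roots \<theta> \<subseteq> R"
  using highest_root_in_roots minus_root simple_root by (auto simp: wall_roots_def)

lemma wall_root_eq_if_pos:
  assumes hr: "highest_root R r alpha \<theta>" and a: "a \<in> wall_roots \<theta>"
    and g: "g \<in> R" "g \<in> NC" and ag: "coroot_pair a g > 0" and sc: "sign_change g a = 0"
  shows "g = a"
  using a unfolding wall_roots_def
proof (elim insertE imageE)
  assume "a = - \<theta>"
  moreover have "g \<bullet> g > 0"
    using root_nonzero[OF g(1)] by simp
  moreover have "2 * (\<theta> \<bullet> g) / (g \<bullet> g) < 0"
    using ag \<open>a = - \<theta>\<close> by (simp add: coroot_pair_def)
  ultimately have "\<theta> \<bullet> g < 0"
    using divide_less_0_iff[of "2 * (\<theta> \<bullet> g)" "g \<bullet> g"] by linarith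
  then show ?thesis
    using highest_root_inner_nonneg[OF hr g(2)] by simp
next
  fix j assume j: "a = alpha j" "j \<in> {1..r}"
  then have "- a \<notin> NC"
    using root_not_pos_and_neg[OF simple_root NC_simple_root] by blast
  then have "- refl_v g a \<notin> NC"
    using sc by (simp add: sign_change_def split: if_splits)
  then have "refl_v g a \<in> NC"
    using root_pos_or_neg refl_v_root[OF g(1)] simple_root j by blast
  then have "alpha j - coroot_pair a g *\<^sub>R g \<in> NC"
    using j(1) by (simp add: refl_v_def)
  then show ?thesis
    using simple_root_eq_if_diff_pos[OF j(2) g] ag j(1) by simp
qed

lemma wall_root_eq_if_neg:
  assumes hr: "highest_root R r alpha \<theta>" and a: "a \<in> wall_roots \<theta>"
    and g: "g \<in> R" "- g \<in> NC" and ag: "coroot_pair a g = 1" and sc: "sign_change g a = 1"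
  shows "g = a"
proof -
  have na: "- a \<in> NC" "- refl_v g a \<notin> NC"
    using sc by (auto simp: sign_change_def split: if_splits)
  from a show ?thesis
    unfolding wall_roots_def
  proof (elim insertE imageE)
    assume a\<theta>: "a = - \<theta>"
    \<comment> \<open>Both \<open>\<theta> + g\<close> and \<open>-(\<theta> + g) = r\<^sub>g a\<close> are nonnegative combinations.\<close>
    have "refl_v g a \<in> NC"
      using root_pos_or_neg refl_v_root[OF g(1)] wall_roots_subset[OF hr] a na(2) by blast
    moreover have "refl_v g a = - (\<theta> + g)"
      using ag a\<theta> by (simp add: refl_v_def)
    moreover have "\<theta> - (- g) \<in> NC"
      using hr minus_root[OF g(1)] g(2) unfolding highest_root_def pos_roots_def by blast
    ultimately have "\<theta> + g = 0"
      using NC_antisym by simp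
    then show ?thesis
      using a\<theta> by (simp add: add_eq_0_iff2)
  next
    fix j assume "a = alpha j" "j \<in> {1..r}"
    then show ?thesis
      using root_not_pos_and_neg[OF simple_root NC_simple_root] na(1) by blast
  qed
qed

subsection \<open>Crossing a wall along an edge\<close>

text \<open>The length condition on an edge \<open>\<lfloor>w r\<^sub>\<beta>\<rfloor> \<leftarrow> w\<close> of the parabolic quantum Bruhat graph, for
  \<open>\<mu> = w \<Lambda>\<close> and \<open>g = w \<beta>\<close>: lengths of minimal representatives are counted by \<open>neg_count\<close>, and
  \<open>2\<langle>\<rho> - \<rho>\<^sub>J, \<beta>\<^sup>\<or>\<rangle>\<close> becomes the sum of pairings below.\<close>

definition qbg_length_condition :: "'a \<Rightarrow> 'a \<Rightarrow> bool" where
  "qbg_length_condition \<mu> g \<longleftrightarrow>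
     real (neg_count (refl_v g \<mu>)) = real (neg_count \<mu>) + 1 \<or>
     real (neg_count (refl_v g \<mu>))
       = real (neg_count \<mu>) - (\<Sum>b\<in>pos_pairing_roots \<mu>. coroot_pair b g) + 1"

lemma neg_count_diff_eq_surviving:
  assumes g: "g \<in> R" and k: "coroot_pair \<mu> g > 0"
  shows "real (neg_count \<mu>) - real (neg_count (refl_v g \<mu>))
    = sign_change g g + (\<Sum>b\<in>surviving_roots \<mu> g - {g}. sign_change g b)"
proof -
  have "finite (surviving_roots \<mu> g)"
    using finite_pos_pairing_roots by (simp add: surviving_roots_def)
  have "real (neg_count \<mu>) - real (neg_count (refl_v g \<mu>))
      = (\<Sum>b\<in>surviving_roots \<mu> g. sign_change g b)"
    using neg_count_diff_eq_sum[OF g] sum_pos_pairing_roots_eq_surviving[where f="sign_change g",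
        OF g k sign_change_refl_v[OF root_nonzero[OF g]]] by simp
  also have "\<dots> = sign_change g g + (\<Sum>b\<in>surviving_roots \<mu> g - {g}. sign_change g b)"
    by (rule sum.remove[OF \<open>finite (surviving_roots \<mu> g)\<close> root_in_surviving_roots[OF g k]])
  finally show ?thesis .
qed

lemma pairing_sum_eq_surviving:
  assumes g: "g \<in> R" and k: "coroot_pair \<mu> g > 0"
  shows "(\<Sum>b\<in>pos_pairing_roots \<mu>. coroot_pair b g)
    = 2 + (\<Sum>b\<in>surviving_roots \<mu> g - {g}. coroot_pair b g)"
proof -
  have "finite (surviving_roots \<mu> g)"
    using finite_pos_pairing_roots by (simp add: surviving_roots_def)
  then show ?thesis
    using sum_pos_pairing_roots_eq_surviving[where f="\<lambda>b. coroot_pair b g",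
        OF g k coroot_pair_refl_v_root[OF root_nonzero[OF g]]]
      root_in_surviving_roots[OF g k] coroot_pair_self[OF root_nonzero[OF g]]
    by (simp add: sum.remove)
qed

lemma neg_count_refl_pos_root:
  assumes g: "g \<in> R" "g \<in> NC" and k: "coroot_pair \<mu> g > 0"
  shows "neg_count (refl_v g \<mu>) \<ge> neg_count \<mu> + 1"
proof -
  have "sign_change g b \<le> 0" if "b \<in> surviving_roots \<mu> g - {g}" for b
    using sign_change_nonpos[OF surviving_roots_acute(1)[OF DiffD1[OF that]] g
        surviving_roots_acute(2)[OF DiffD1[OF that]]] .
  then have "(\<Sum>b\<in>surviving_roots \<mu> g - {g}. sign_change g b) \<le> 0"
    by (rule sum_nonpos)
  then show ?thesis
    using neg_count_diff_eq_surviving[OF g(1) k] sign_change_self(1)[OF g] by linarith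
qed

lemma sign_change_surviving_pos_root:
  assumes g: "g \<in> R" "g \<in> NC" and k: "coroot_pair \<mu> g > 0"
    and a: "a \<in> surviving_roots \<mu> g - {g}" and step: "qbg_length_condition \<mu> g"
  shows "sign_change g a = 0"
proof -
  let ?V = "surviving_roots \<mu> g - {g}"
  have fin: "finite ?V"
    using finite_pos_pairing_roots by (simp add: surviving_roots_def)
  have acute: "b \<in> R" "coroot_pair b g \<ge> 0" if "b \<in> ?V" for b
    using surviving_roots_acute[OF DiffD1[OF that]] .
  have le: "sign_change g b \<le> 0" if "b \<in> ?V" for b
    using sign_change_nonpos[OF acute(1)[OF that] g acute(2)[OF that]] .
  have "(\<Sum>b\<in>?V. coroot_pair b g) \<ge> 0"
    using acute(2) by (rule sum_nonneg)
  moreover have "(\<Sum>b\<in>?V. sign_change g b) \<le> 0"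
    using le by (intro sum_nonpos) blast
  moreover note neg_count_diff_eq_surviving[OF g(1) k] pairing_sum_eq_surviving[OF g(1) k]
  \<comment> \<open>The count drops by at least one while the pairing sum is at least \<open>2\<close>: only the Bruhat
    alternative fits, and it leaves no room for nonzero terms.\<close>
  ultimately have "(\<Sum>b\<in>?V. sign_change g b) = 0"
    using step sign_change_self(1)[OF g] unfolding qbg_length_condition_def
    by (elim disjE) linarith+
  then have "(\<Sum>b\<in>?V. - sign_change g b) = 0"
    by (simp add: sum_negf)
  moreover have "0 \<le> - sign_change g b" if "b \<in> ?V" for b
    using le[OF that] by simp
  ultimately have "\<forall>b\<in>?V. - sign_change g b = 0"
    using sum_nonneg_eq_0_iff[OF fin, of "\<lambda>b. - sign_change g b"] by blast
  then show ?thesis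
    using a by simp
qed

lemma sign_change_surviving_neg_root:
  assumes g: "g \<in> R" "- g \<in> NC" and k: "coroot_pair \<mu> g > 0"
    and a: "a \<in> surviving_roots \<mu> g - {g}" and step: "qbg_length_condition \<mu> g"
  shows "sign_change g a = coroot_pair a g"
proof -
  let ?V = "surviving_roots \<mu> g - {g}"
  have fin: "finite ?V"
    using finite_pos_pairing_roots by (simp add: surviving_roots_def)
  have acute: "b \<in> R" "coroot_pair b g \<ge> 0" if "b \<in> ?V" for b
    using surviving_roots_acute[OF DiffD1[OF that]] .
  have ge: "coroot_pair b g - sign_change g b \<ge> 0" if "b \<in> ?V" for b
    using sign_change_le_coroot_pair[OF acute(1)[OF that] g(1) acute(2)[OF that]] by simp
  have "sign_change g b \<ge> 0" if "b \<in> ?V" for b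
    using sign_change_nonneg[OF acute(1)[OF that] g acute(2)[OF that]] .
  then have "(\<Sum>b\<in>?V. sign_change g b) \<ge> 0"
    by (rule sum_nonneg)
  moreover note neg_count_diff_eq_surviving[OF g(1) k] pairing_sum_eq_surviving[OF g(1) k]
  \<comment> \<open>Now the count grows by at least one, so only the quantum alternative fits.\<close>
  ultimately have "(\<Sum>b\<in>?V. sign_change g b) = (\<Sum>b\<in>?V. coroot_pair b g)"
    using step sign_change_self(2)[OF g] unfolding qbg_length_condition_def
    by (elim disjE) linarith+
  then have "(\<Sum>b\<in>?V. coroot_pair b g - sign_change g b) = 0"
    by (simp add: sum_subtractf)
  then have "\<forall>b\<in>?V. coroot_pair b g - sign_change g b = 0"
    using sum_nonneg_eq_0_iff[OF fin, of "\<lambda>b. coroot_pair b g - sign_change g b"] ge by blast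
  then show ?thesis
    using a by simp
qed

text \<open>With \<open>\<mu> = w \<Lambda>\<close> and \<open>g = w \<beta>\<close>: an edge crossing the wall of \<open>a\<close> is labelled by \<open>a\<close>.\<close>

lemma wall_crossing_root_eq:
  assumes hr: "highest_root R r alpha \<theta>" and a: "a \<in> wall_roots \<theta>"
    and g: "g \<in> R" and k: "coroot_pair \<mu> g > 0" and ka: "coroot_pair \<mu> a > 0"
    and kb: "coroot_pair (refl_v g \<mu>) a \<le> 0" and step: "qbg_length_condition \<mu> g"
  shows "g = a"
proof (rule ccontr)
  assume ne: "g \<noteq> a"
  have aR: "a \<in> R"
    using wall_roots_subset[OF hr] a by blast
  have "coroot_pair \<mu> g * coroot_pair g a > 0"
    using kb ka coroot_pair_refl_v_left[of g \<mu> a] by linarith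
  then have "coroot_pair g a > 0"
    using k by (simp add: zero_less_mult_iff)
  then have ag: "coroot_pair a g > 0"
    using coroot_pair_pos_commute[OF root_nonzero[OF aR] root_nonzero[OF g]] by simp
  have "refl_v g a \<notin> pos_pairing_roots \<mu>"
    using kb coroot_pair_refl_v_swap[OF root_nonzero[OF g], of \<mu> a]
    by (simp add: pos_pairing_roots_def)
  then have aV: "a \<in> surviving_roots \<mu> g - {g}"
    using surviving_rootsI[OF g _ ag] aR ka ne by (simp add: pos_pairing_roots_def)
  consider "g \<in> NC" | "- g \<in> NC"
    using root_pos_or_neg[OF g] by blast
  then show False
  proof cases
    case 1
    then show False
      using wall_root_eq_if_pos[OF hr a g 1 ag sign_change_surviving_pos_root[OF g 1 k aV step]]
        ne by blast
  next
    case 2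
    have sc: "sign_change g a = coroot_pair a g"
      using sign_change_surviving_neg_root[OF g 2 k aV step] .
    obtain n :: nat where n: "coroot_pair a g = real n"
      using coroot_pair_nonneg_nat[OF aR g] ag by fastforce
    have "0 < real n" "real n \<le> 1"
      using n ag sc sign_change_le_1[of g a] by linarith+
    then have "coroot_pair a g = 1"
      using n by simp
    then show False
      using wall_root_eq_if_neg[OF hr a g 2] sc ne by simp
  qed
qed

end

section \<open>The parabolic quotient of a dominant weight\<close>

locale dominant_weight = based_root_system +
  fixes lam :: 'a and m :: "nat \<Rightarrow> nat"
  assumes lam: "\<forall>i\<in>{1..r}. coroot_pair lam (alpha i) = real (m i)"
begin

abbreviation "J \<equiv> Jset r alpha lam"
abbreviation "W \<equiv> weyl_gen alpha {1..r}"
abbreviation "WJ \<equiv> weyl_gen alpha J"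
abbreviation "min_reps \<equiv> minrep r alpha J"
abbreviation "len \<equiv> wlen r alpha"

lemma Jset_subset: "J \<subseteq> {1..r}"
  by (auto simp: Jset_def)

lemma in_Jset_iff: "i \<in> J \<longleftrightarrow> i \<in> {1..r} \<and> m i = 0"
  using lam by (auto simp: Jset_def)

lemma coroot_pair_lam_expand:
  assumes "b = (\<Sum>i=1..r. a i *\<^sub>R alpha i)"
  shows "coroot_pair lam b = (\<Sum>i=1..r. a i * real (m i) * (alpha i \<bullet> alpha i)) / (b \<bullet> b)"
proof -
  have "2 * (lam \<bullet> alpha i) = real (m i) * (alpha i \<bullet> alpha i)" if "i \<in> {1..r}" for i
  proof -
    have "coroot_pair lam (alpha i) = real (m i)"
      using lam that by blast
    then show ?thesis
      using simple_root_nonzero[OF that] by (simp add: coroot_pair_def field_simps)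
  qed
  then have "2 * (lam \<bullet> b) = (\<Sum>i=1..r. a i * real (m i) * (alpha i \<bullet> alpha i))"
    by (simp add: assms inner_sum_right sum_distrib_left mult.left_commute[of 2] mult.assoc)
  then show ?thesis
    by (simp add: coroot_pair_def)
qed

lemma coroot_pair_lam_nonneg: "b \<in> NC \<Longrightarrow> coroot_pair lam b \<ge> 0"
  unfolding nonneg_comb_def
  by (auto simp: coroot_pair_lam_expand intro!: divide_nonneg_nonneg sum_nonneg)

lemma coroot_pair_lam_eq_0_iff:
  assumes "b \<in> R" "b = (\<Sum>i=1..r. real (c i) *\<^sub>R alpha i)"
  shows "coroot_pair lam b = 0 \<longleftrightarrow> (\<forall>i\<in>{1..r}. i \<notin> J \<longrightarrow> c i = 0)"
proof -
  have "b \<bullet> b > 0"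
    using root_nonzero[OF assms(1)] by simp
  then have "coroot_pair lam b = 0
      \<longleftrightarrow> (\<forall>i\<in>{1..r}. real (c i) * real (m i) * (alpha i \<bullet> alpha i) = 0)"
    unfolding coroot_pair_lam_expand[OF assms(2)] by (simp add: sum_nonneg_eq_0_iff)
  also have "\<dots> \<longleftrightarrow> (\<forall>i\<in>{1..r}. i \<notin> J \<longrightarrow> c i = 0)"
    using simple_root_nonzero in_Jset_iff by auto
  finally show ?thesis .
qed

lemma pos_roots_J_iff:
  "b \<in> pos_roots_J R r alpha J \<longleftrightarrow> b \<in> R \<and> b \<in> NC \<and> coroot_pair lam b = 0"
proof (cases "b \<in> R \<and> b \<in> NC")
  case True
  then obtain c where c: "b = (\<Sum>i=1..r. real (c i) *\<^sub>R alpha i)"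
    unfolding nonneg_comb_def by blast
  have "(\<exists>z::nat\<Rightarrow>int. b = (\<Sum>i\<in>J. of_int (z i) *\<^sub>R alpha i))
      \<longleftrightarrow> (\<forall>i\<in>{1..r}. i \<notin> J \<longrightarrow> c i = 0)"
  proof
    assume "\<exists>z::nat\<Rightarrow>int. b = (\<Sum>i\<in>J. of_int (z i) *\<^sub>R alpha i)"
    then obtain z :: "nat \<Rightarrow> int" where "b = (\<Sum>i\<in>J. of_int (z i) *\<^sub>R alpha i)" ..
    also have "\<dots> = (\<Sum>i=1..r. (if i \<in> J then of_int (z i) else 0) *\<^sub>R alpha i)"
      by (rule sum.mono_neutral_cong_left) (use Jset_subset in auto)
    finally show "\<forall>i\<in>{1..r}. i \<notin> J \<longrightarrow> c i = 0"
      using simple_coeffs_unique[OF c[symmetric, THEN trans]] by fastforce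
  next
    assume z: "\<forall>i\<in>{1..r}. i \<notin> J \<longrightarrow> c i = 0"
    have "b = (\<Sum>i\<in>J. of_int (int (c i)) *\<^sub>R alpha i)"
      unfolding c by (simp, rule sum.mono_neutral_right) (use Jset_subset z in auto)
    then show "\<exists>z::nat\<Rightarrow>int. b = (\<Sum>i\<in>J. of_int (z i) *\<^sub>R alpha i)"
      by (rule exI[of _ "\<lambda>i. int (c i)"])
  qed
  then show ?thesis
    using True coroot_pair_lam_eq_0_iff[OF _ c]
    by (simp add: pos_roots_J_def pos_roots_def)
qed (auto simp: pos_roots_J_def pos_roots_def)

lemma pos_roots_diff_J_iff:
  assumes "b \<in> R"
  shows "b \<in> pos_roots R r alpha - pos_roots_J R r alpha J \<longleftrightarrow> coroot_pair lam b > 0"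
proof -
  have "b \<in> NC" if "coroot_pair lam b > 0"
    using root_pos_or_neg[OF assms] coroot_pair_lam_nonneg[of "- b"] that
    by (auto simp: coroot_pair_minus_right)
  then show ?thesis
    using assms pos_roots_J_iff coroot_pair_lam_nonneg[of b] by (fastforce simp: pos_roots_def)
qed

lemma refl_v_in_WJ:
  assumes "b \<in> R" "coroot_pair lam b = 0"
  shows "refl_v b \<in> WJ"
proof -
  have "refl_v b' \<in> WJ" if b': "b' \<in> R" "b' \<in> NC" "coroot_pair lam b' = 0" for b'
  proof -
    obtain c where "b' = (\<Sum>i=1..r. real (c i) *\<^sub>R alpha i)"
      using b'(2) unfolding nonneg_comb_def by blast
    then show ?thesis
      using refl_v_in_weyl_gen_support[OF Jset_subset] coroot_pair_lam_eq_0_iff b' by blast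
  qed
  then show ?thesis
    using assms root_pos_or_neg[OF assms(1)] minus_root[OF assms(1)] refl_v_minus_root
    by (metis coroot_pair_minus_right neg_equal_0_iff_equal)
qed

lemma WJ_fixes_lam: "v \<in> WJ \<Longrightarrow> v lam = lam"
proof -
  assume "v \<in> WJ"
  then obtain ks where ks: "set ks \<subseteq> J" "v = wprod alpha ks"
    using weyl_gen_iff by blast
  have "wprod alpha ks lam = lam"
    using ks(1) by (induction ks) (auto simp: refl_v_def Jset_def)
  then show ?thesis
    using ks by simp
qed

lemma WJ_pos_root:
  assumes v: "v \<in> WJ" and b: "b \<in> R" "coroot_pair lam b > 0"
  shows "v b \<in> NC"
proof -
  have "b \<in> NC"
    using pos_roots_diff_J_iff[OF b(1)] b(2) by (auto simp: pos_roots_def)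
  then obtain c where c: "b = (\<Sum>i=1..r. real (c i) *\<^sub>R alpha i)"
    unfolding nonneg_comb_def by blast
  then obtain k where "k \<in> {1..r}" "k \<notin> J" "c k > 0"
    using coroot_pair_lam_eq_0_iff[OF b(1) c] b(2) by auto
  then show ?thesis
    using weyl_gen_pos_root[OF Jset_subset v b(1) c] by blast
qed

lemma WJ_subset_W: "v \<in> WJ \<Longrightarrow> v \<in> W"
  using weyl_gen_mono[OF Jset_subset] .

lemma min_reps_in_W: "u \<in> min_reps \<Longrightarrow> u \<in> W"
  by (simp add: minrep_def)

lemma min_reps_minimal: "u \<in> min_reps \<Longrightarrow> v \<in> WJ \<Longrightarrow> len u \<le> len (u \<circ> v)"
  by (simp add: minrep_def)

lemma wlen_simple_comp_le:
  assumes "x \<in> W" "i \<in> {1..r}"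
  shows "len (refl_v (alpha i) \<circ> x) \<le> len x + 1"
proof -
  obtain ks where ks: "set ks \<subseteq> {1..r}" "length ks = len x" "wprod alpha ks = x"
    using reduced_word_exists[OF assms(1)] .
  have "len (wprod alpha (i # ks)) \<le> length (i # ks)"
    using ks assms(2) by (intro wlen_wprod_le) auto
  then show ?thesis
    using ks by simp
qed

lemma min_rep_pos_simple_J:
  assumes u: "u \<in> min_reps" and j: "j \<in> J"
  shows "u (alpha j) \<in> NC"
proof (rule ccontr)
  have jr: "j \<in> {1..r}"
    using j Jset_subset by blast
  assume "u (alpha j) \<notin> NC"
  then have "- u (alpha j) \<in> NC"
    using root_pos_or_neg weyl_gen_root[OF _ min_reps_in_W[OF u] simple_root[OF jr]] by blast
  moreover obtain ks where ks: "set ks \<subseteq> {1..r}" "length ks = len u" "wprod alpha ks = u"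
    using reduced_word_exists[OF min_reps_in_W[OF u]] .
  ultimately obtain js where js: "set js \<subseteq> {1..r}" "length js + 1 = length ks"
    "wprod alpha js = u \<circ> refl_v (alpha j)"
    using exchange_right[OF ks(1) jr] by metis
  have "len (u \<circ> refl_v (alpha j)) \<le> length js"
    using wlen_wprod_le[OF js(1)] js(3) by simp
  moreover have "len u \<le> len (u \<circ> refl_v (alpha j))"
    using min_reps_minimal[OF u simple_refl_in_weyl_gen[OF j]] .
  ultimately show False
    using js(2) ks(2) by simp
qed

lemma min_rep_pos_root_J:
  assumes u: "u \<in> min_reps" and b: "b \<in> R" "b \<in> NC" "coroot_pair lam b = 0"
  shows "u b \<in> NC"
proof -
  obtain c where c: "b = (\<Sum>i=1..r. real (c i) *\<^sub>R alpha i)"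
    using b(2) unfolding nonneg_comb_def by blast
  have "\<forall>i\<in>{1..r}. i \<notin> J \<longrightarrow> c i = 0"
    using coroot_pair_lam_eq_0_iff[OF b(1) c] b(3) by blast
  then have "b = (\<Sum>i\<in>J. real (c i) *\<^sub>R alpha i)"
    unfolding c by (intro sum.mono_neutral_right) (use Jset_subset in auto)
  then have "u b = (\<Sum>i\<in>J. real (c i) *\<^sub>R u (alpha i))"
    using orthogonal_transformation_weyl_gen[OF _ min_reps_in_W[OF u]]
    by (simp add: linear_sum linear_scale orthogonal_transformation_linear)
  also have "\<dots> \<in> NC"
    using min_rep_pos_simple_J[OF u] finite_subset[OF Jset_subset]
    by (intro NC_sum NC_scaleR) auto
  finally show ?thesis .
qed

lemma min_reps_coset_eq:
  assumes u1: "u1 \<in> min_reps" and v: "v \<in> WJ" and u2: "u1 \<circ> v \<in> min_reps"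
  shows "v = id"
proof (rule weyl_gen_eq_id_if_pos[OF Jset_subset v])
  fix b assume bR: "b \<in> R" and bNC: "b \<in> NC"
  have vo: "orthogonal_transformation v"
    using orthogonal_transformation_weyl_gen[OF Jset_subset v] .
  consider "coroot_pair lam b > 0" | "coroot_pair lam b = 0"
    using coroot_pair_lam_nonneg[OF bNC] by linarith
  then show "v b \<in> NC"
  proof cases
    case 1
    then show ?thesis
      using WJ_pos_root[OF v bR] by blast
  next
    case 2
    \<comment> \<open>Otherwise \<open>u\<^sub>1\<close> and \<open>u\<^sub>1 v\<close> would send \<open>-v b\<close> and \<open>v b\<close> to positive roots.\<close>
    show ?thesis
    proof (rule ccontr)
      assume "v b \<notin> NC"
      moreover have vbR: "v b \<in> R"
        using weyl_gen_root[OF Jset_subset v bR] .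
      ultimately have n: "- v b \<in> NC"
        using root_pos_or_neg by blast
      have "coroot_pair lam (- v b) = 0"
        using orthogonal_transformation_coroot_pair[OF vo, of lam b] WJ_fixes_lam[OF v] 2
        by (simp add: coroot_pair_minus_right)
      then have "u1 (- v b) \<in> NC"
        using min_rep_pos_root_J[OF u1 minus_root[OF vbR] n] by blast
      then have "- (u1 \<circ> v) b \<in> NC"
        using linear_neg[OF orthogonal_transformation_linear[OF
              orthogonal_transformation_weyl_gen[OF _ min_reps_in_W[OF u1]]]] by simp
      moreover have "(u1 \<circ> v) b \<in> NC"
        using min_rep_pos_root_J[OF u2 bR bNC 2] .
      moreover have "(u1 \<circ> v) b \<in> R"
        using weyl_gen_root[OF _ min_reps_in_W[OF u2] bR] by simp
      ultimately show False
        using root_not_pos_and_neg by blast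
    qed
  qed
qed

lemma floorJ_unique:
  assumes x: "x \<in> W"
  shows "\<exists>!u. u \<in> min_reps \<and> (\<exists>v\<in>WJ. u = x \<circ> v)"
proof -
  have "\<exists>u. (\<exists>v\<in>WJ. u = x \<circ> v) \<and> (\<forall>y. (\<exists>v\<in>WJ. y = x \<circ> v) \<longrightarrow> len u \<le> len y)"
    by (rule ex_has_least_nat[of "\<lambda>y. \<exists>v\<in>WJ. y = x \<circ> v" x]) (rule bexI[OF _ id_in_weyl_gen], simp)
  then obtain u v0 where v0: "v0 \<in> WJ" "u = x \<circ> v0"
    and umin: "\<And>y. (\<exists>v\<in>WJ. y = x \<circ> v) \<Longrightarrow> len u \<le> len y"
    by blast
  have "u \<in> min_reps"
    unfolding minrep_def
  proof (intro CollectI conjI ballI)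
    show "u \<in> W"
      using v0 weyl_gen_comp[OF x WJ_subset_W[OF v0(1)]] by simp
    fix v' assume "v' \<in> WJ"
    then have "v0 \<circ> v' \<in> WJ"
      using weyl_gen_comp v0(1) by blast
    moreover have "u \<circ> v' = x \<circ> (v0 \<circ> v')"
      using v0(2) by (simp add: comp_assoc)
    ultimately show "len u \<le> len (u \<circ> v')"
      using umin by blast
  qed
  moreover have "u' = u" if rep: "u' \<in> min_reps \<and> (\<exists>v\<in>WJ. u' = x \<circ> v)" for u'
  proof -
    obtain v' where u': "u' \<in> min_reps" "v' \<in> WJ" "u' = x \<circ> v'"
      using rep by blast
    obtain w where w: "w \<in> WJ" "w \<circ> v' = id" "v' \<circ> w = id"
      using weyl_gen_inverse[OF Jset_subset u'(2)] .
    have "u' \<circ> (w \<circ> v0) = x \<circ> (v' \<circ> w) \<circ> v0"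
      using u'(3) by (simp add: comp_assoc)
    also have "\<dots> = u"
      using w(3) v0(2) by simp
    finally have e: "u' \<circ> (w \<circ> v0) = u" .
    then have "w \<circ> v0 = id"
      using min_reps_coset_eq[OF u'(1) weyl_gen_comp[OF w(1) v0(1)]] \<open>u \<in> min_reps\<close> by simp
    then show ?thesis
      using e by simp
  qed
  ultimately show ?thesis
    using v0 by (intro ex1I[of _ u]) blast+
qed

lemma floorJ_in_coset:
  assumes "x \<in> W"
  shows "floorJ r alpha J x \<in> min_reps" "\<exists>v\<in>WJ. floorJ r alpha J x = x \<circ> v"
  using theI'[OF floorJ_unique[OF assms]] unfolding floorJ_def by simp_all

lemma floorJ_lam:
  assumes "x \<in> W"
  shows "floorJ r alpha J x lam = x lam"
proof -
  obtain v where v: "v \<in> WJ" "floorJ r alpha J x = x \<circ> v"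
    using floorJ_in_coset(2)[OF assms] by blast
  then show ?thesis
    using WJ_fixes_lam[OF v(1)] by simp
qed

lemma neg_count_wprod_le: "set ks \<subseteq> {1..r} \<Longrightarrow> neg_count (wprod alpha ks lam) \<le> length ks"
proof (induction ks)
  case Nil
  have "{b\<in>R. b \<in> NC \<and> coroot_pair lam b < 0} = {}"
    using coroot_pair_lam_nonneg by force
  then show ?case
    unfolding neg_count_def by (simp only: wprod_Nil id_apply card.empty)
next
  case (Cons i ks)
  then show ?case
    using neg_count_refl_simple_le[of i "wprod alpha ks lam"] by simp
qed

lemma refl_simple_comp_in_coset:
  assumes x: "x \<in> W" and i: "i \<in> {1..r}" and wall: "coroot_pair (x lam) (alpha i) = 0"
  obtains v where "v \<in> WJ" "refl_v (alpha i) \<circ> x \<circ> v = x"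
proof -
  obtain y where y: "y \<in> W" "x \<circ> y = id"
    using weyl_gen_inverse[OF _ x] by blast
  let ?\<beta> = "y (alpha i)"
  have xo: "orthogonal_transformation x"
    using orthogonal_transformation_weyl_gen[OF _ x] by simp
  have x\<beta>: "x ?\<beta> = alpha i"
    using y(2) by (simp add: fun_eq_iff)
  have \<beta>R: "?\<beta> \<in> R"
    using weyl_gen_root[OF _ y(1) simple_root[OF i]] by simp
  have "coroot_pair lam ?\<beta> = 0"
    using orthogonal_transformation_coroot_pair[OF xo, of lam ?\<beta>] x\<beta> wall by simp
  then have "refl_v ?\<beta> \<in> WJ"
    by (rule refl_v_in_WJ[OF \<beta>R])
  have "refl_v (alpha i) \<circ> x \<circ> refl_v ?\<beta> = refl_v (alpha i) \<circ> (x \<circ> refl_v ?\<beta>)"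
    by (simp only: comp_assoc)
  also have "\<dots> = (refl_v (alpha i) \<circ> refl_v (alpha i)) \<circ> x"
    by (simp only: refl_v_comp_conj[OF xo x\<beta>] comp_assoc)
  also have "\<dots> = x"
    using refl_v_comp_refl_v[OF simple_root_nonzero[OF i]] by simp
  finally show ?thesis
    using that \<open>refl_v ?\<beta> \<in> WJ\<close> by blast
qed

lemma wlen_refl_simple_comp_descent:
  assumes x: "x \<in> W" and i: "i \<in> {1..r}" and v: "v \<in> WJ"
    and neg: "coroot_pair (x lam) (alpha i) < 0"
  shows "len (refl_v (alpha i) \<circ> (x \<circ> v)) + 1 \<le> len (x \<circ> v)"
proof -
  obtain y where y: "y \<in> W" "y \<circ> x = id" "x \<circ> y = id"
    using weyl_gen_inverse[OF _ x] by blast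
  obtain w where w: "w \<in> WJ" "w \<circ> v = id"
    using weyl_gen_inverse[OF Jset_subset v] by blast
  have "(w \<circ> y) \<circ> (x \<circ> v) = w \<circ> (y \<circ> x) \<circ> v"
    by (simp only: comp_assoc)
  then have inv: "(w \<circ> y) \<circ> (x \<circ> v) = id"
    using y(2) w(2) by simp
  \<comment> \<open>\<open>-x\<^sup>-\<^sup>1 \<alpha>\<^sub>i\<close> pairs positively with \<open>\<Lambda>\<close>, so \<open>w \<in> W\<^sub>J\<close> keeps it positive.\<close>
  have xo: "orthogonal_transformation x"
    using orthogonal_transformation_weyl_gen[OF _ x] by simp
  have "coroot_pair lam (- y (alpha i)) > 0"
    using orthogonal_transformation_coroot_pair[OF xo, of lam "y (alpha i)"] y(3) neg
    by (simp add: coroot_pair_minus_right fun_eq_iff)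
  then have "w (- y (alpha i)) \<in> NC"
    using WJ_pos_root[OF w(1) minus_root[OF weyl_gen_root[OF _ y(1) simple_root[OF i]]]] by simp
  then have "- (w \<circ> y) (alpha i) \<in> NC"
    using linear_neg[OF orthogonal_transformation_linear[OF
          orthogonal_transformation_weyl_gen[OF Jset_subset w(1)]]] by simp
  with inv show ?thesis
    by (rule wlen_simple_descent[OF weyl_gen_comp[OF x WJ_subset_W[OF v]] i])
qed

lemma coset_wlen_le_neg_count_step:
  assumes xW: "x \<in> W" and i: "i \<in> {1..r}"
    and v: "v \<in> WJ" "len (x \<circ> v) \<le> neg_count (x lam)"
  shows "\<exists>v'\<in>WJ. len (refl_v (alpha i) \<circ> x \<circ> v') \<le> neg_count (refl_v (alpha i) (x lam))"
proof -
  let ?s = "refl_v (alpha i)"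
  have sv: "len (?s \<circ> x \<circ> v) = len (?s \<circ> (x \<circ> v))"
    by (simp add: comp_assoc)
  consider "coroot_pair (x lam) (alpha i) > 0" | "coroot_pair (x lam) (alpha i) = 0"
    | "coroot_pair (x lam) (alpha i) < 0"
    by linarith
  then show ?thesis
  proof cases
    case 1
    then have "neg_count (?s (x lam)) \<ge> neg_count (x lam) + 1"
      by (rule neg_count_refl_pos_root[OF simple_root[OF i] NC_simple_root[OF i]])
    moreover have "len (?s \<circ> x \<circ> v) \<le> len (x \<circ> v) + 1"
      using wlen_simple_comp_le[OF weyl_gen_comp[OF xW WJ_subset_W[OF v(1)]] i] sv by simp
    ultimately show ?thesis
      using v by (intro bexI[OF _ v(1)]) linarith
  next
    case 2
    then obtain v' where v': "v' \<in> WJ" "?s \<circ> x \<circ> v' = x"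
      using refl_simple_comp_in_coset[OF xW i] by metis
    then have "?s \<circ> x \<circ> (v' \<circ> v) = x \<circ> v"
      by (simp add: comp_assoc[symmetric])
    moreover have "?s (x lam) = x lam"
      using 2 by (simp add: refl_v_def)
    ultimately show ?thesis
      using v(2) weyl_gen_comp[OF v'(1) v(1)] by (metis (no_types, lifting))
  next
    case 3
    have "len (?s \<circ> x \<circ> v) + 1 \<le> len (x \<circ> v)"
      using wlen_refl_simple_comp_descent[OF xW i v(1) 3] sv by simp
    moreover have "neg_count (x lam) \<le> neg_count (?s (x lam)) + 1"
      using neg_count_refl_simple_le[OF i, of "?s (x lam)"]
        refl_v_refl_v[OF simple_root_nonzero[OF i]] by simp
    ultimately show ?thesis
      using v by (intro bexI[OF _ v(1)]) linarith
  qed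
qed

lemma coset_wlen_le_neg_count:
  assumes "x \<in> W"
  shows "\<exists>v\<in>WJ. len (x \<circ> v) \<le> neg_count (x lam)"
  using assms
proof (induction "len x" arbitrary: x rule: less_induct)
  case less
  obtain ks where ks: "set ks \<subseteq> {1..r}" "length ks = len x" "wprod alpha ks = x"
    using reduced_word_exists[OF less.prems] .
  show ?case
  proof (cases ks)
    case Nil
    then have "x = id" "len x = 0"
      using ks by simp_all
    then show ?thesis
      by (intro bexI[OF _ id_in_weyl_gen]) simp
  next
    case (Cons i ks')
    let ?x = "wprod alpha ks'"
    have i: "i \<in> {1..r}" and xW: "?x \<in> W" and xx: "x = refl_v (alpha i) \<circ> ?x"
      using ks Cons weyl_gen_iff by auto
    have "len ?x < len x"
      using wlen_wprod_le[of ks'] ks Cons by simp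
    with less.hyps obtain v where "v \<in> WJ" "len (?x \<circ> v) \<le> neg_count (?x lam)"
      using xW by blast
    then show ?thesis
      using coset_wlen_le_neg_count_step[OF xW i] xx by simp
  qed
qed

lemma wlen_min_rep:
  assumes u: "u \<in> min_reps"
  shows "len u = neg_count (u lam)"
proof (rule antisym)
  obtain v where v: "v \<in> WJ" "len (u \<circ> v) \<le> neg_count (u lam)"
    using coset_wlen_le_neg_count[OF min_reps_in_W[OF u]] by blast
  then show "len u \<le> neg_count (u lam)"
    using min_reps_minimal[OF u v(1)] by linarith
  obtain ks where ks: "set ks \<subseteq> {1..r}" "length ks = len u" "wprod alpha ks = u"
    using reduced_word_exists[OF min_reps_in_W[OF u]] .
  then show "neg_count (u lam) \<le> len u"
    using neg_count_wprod_le[OF ks(1)] by simp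
qed

lemma wlen_floorJ: "x \<in> W \<Longrightarrow> len (floorJ r alpha J x) = neg_count (x lam)"
  using wlen_min_rep[OF floorJ_in_coset(1)] floorJ_lam by simp

subsection \<open>Edges of the parabolic quantum Bruhat graph and \<open>\<sigma>\<close>-paths\<close>

lemma rho_pairing:
  assumes w: "w \<in> W" and b: "b \<in> R"
  shows "2 * coroot_pair (rho_vec (pos_roots R r alpha) - rho_vec (pos_roots_J R r alpha J)) b
    = (\<Sum>a\<in>pos_pairing_roots (w lam). coroot_pair a (w b))"
proof -
  let ?P = "pos_roots R r alpha" and ?PJ = "pos_roots_J R r alpha J"
  let ?A = "pos_pairing_roots lam"
  have PR: "?P \<subseteq> R"
    by (auto simp: pos_roots_def)
  have finP: "finite ?P"
    using finite_subset[OF PR finite_roots] .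
  have "rho_vec ?P - rho_vec ?PJ = (1/2) *\<^sub>R (\<Sum>g\<in>?P - ?PJ. g)"
    using sum_diff[OF finP, of ?PJ id] by (auto simp: rho_vec_def pos_roots_J_def scaleR_diff_right)
  then have "2 * coroot_pair (rho_vec ?P - rho_vec ?PJ) b = (\<Sum>g\<in>?P - ?PJ. coroot_pair g b)"
    using finP by (simp add: coroot_pair_scaleR coroot_pair_sum)
  also have "?P - ?PJ = ?A"
    using pos_roots_diff_J_iff PR by (auto simp: pos_pairing_roots_def)
  finally have rho: "2 * coroot_pair (rho_vec ?P - rho_vec ?PJ) b = (\<Sum>g\<in>?A. coroot_pair g b)" .
  have wo: "orthogonal_transformation w"
    using orthogonal_transformation_weyl_gen[OF _ w] by simp
  obtain w' where w': "w' \<in> W" "w \<circ> w' = id"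
    using weyl_gen_inverse[OF _ w] by blast
  have "pos_pairing_roots (w lam) = w ` ?A"
  proof (intro set_eqI iffI)
    fix a assume a: "a \<in> pos_pairing_roots (w lam)"
    have "w (w' a) = a"
      using w'(2) by (simp add: fun_eq_iff)
    then have "w' a \<in> ?A"
      using a weyl_gen_root[OF _ w'(1)] orthogonal_transformation_coroot_pair[OF wo, of lam "w' a"]
      by (auto simp: pos_pairing_roots_def)
    with \<open>w (w' a) = a\<close> show "a \<in> w ` ?A"
      by (metis image_eqI)
  qed (use weyl_gen_root[OF _ w] orthogonal_transformation_coroot_pair[OF wo] in
      \<open>auto simp: pos_pairing_roots_def\<close>)
  then have "(\<Sum>a\<in>pos_pairing_roots (w lam). coroot_pair a (w b)) = (\<Sum>g\<in>?A. coroot_pair (w g) (w b))"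
    using orthogonal_transformation_inj[OF wo] by (simp add: sum.reindex inj_on_def inj_def)
  also have "\<dots> = (\<Sum>g\<in>?A. coroot_pair g b)"
    using orthogonal_transformation_coroot_pair[OF wo] by simp
  finally show ?thesis
    using rho by simp
qed

lemma qbg_edge_facts:
  assumes "qbg_edge R r alpha J w b w'"
  shows "w \<in> min_reps" "b \<in> R" "coroot_pair lam b > 0" "w b \<in> R"
    "w' = floorJ r alpha J (w \<circ> refl_v b)" "w \<circ> refl_v b \<in> W"
    "w' lam = refl_v (w b) (w lam)" "coroot_pair (w lam) (w b) = coroot_pair lam b"
proof -
  show w: "w \<in> min_reps" and fl: "w' = floorJ r alpha J (w \<circ> refl_v b)"
    using assms by (simp_all add: qbg_edge_def)
  have bP: "b \<in> pos_roots R r alpha - pos_roots_J R r alpha J"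
    using assms by (simp add: qbg_edge_def)
  then show bR: "b \<in> R"
    by (simp add: pos_roots_def)
  show "coroot_pair lam b > 0"
    using pos_roots_diff_J_iff[OF bR] bP by blast
  show "w b \<in> R"
    using weyl_gen_root[OF _ min_reps_in_W[OF w] bR] by simp
  show xW: "w \<circ> refl_v b \<in> W"
    using weyl_gen_comp[OF min_reps_in_W[OF w] refl_v_in_weyl_gen[OF bR]] .
  have wo: "orthogonal_transformation w"
    using orthogonal_transformation_weyl_gen[OF _ min_reps_in_W[OF w]] by simp
  show "w' lam = refl_v (w b) (w lam)"
    using fl floorJ_lam[OF xW] refl_v_conj[OF wo] by simp
  show "coroot_pair (w lam) (w b) = coroot_pair lam b"
    using orthogonal_transformation_coroot_pair[OF wo] .
qed

lemma qbg_edge_length_condition: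
  assumes e: "qbg_edge R r alpha J w b w'"
  shows "qbg_length_condition (w lam) (w b)"
proof -
  note facts = qbg_edge_facts[OF e]
  have "len w' = neg_count ((w \<circ> refl_v b) lam)"
    using wlen_floorJ[OF facts(6)] facts(5) by simp
  also have "(w \<circ> refl_v b) lam = w' lam"
    using facts(5) floorJ_lam[OF facts(6)] by simp
  finally have len': "len w' = neg_count (refl_v (w b) (w lam))"
    using facts(7) by simp
  from e have "real (len w') = real (len w) + 1 \<or> real (len w') = real (len w)
      - 2 * coroot_pair (rho_vec (pos_roots R r alpha) - rho_vec (pos_roots_J R r alpha J)) b + 1"
    unfolding qbg_edge_def by blast
  then show ?thesis
    unfolding qbg_length_condition_def len' wlen_min_rep[OF facts(1)]
      rho_pairing[OF min_reps_in_W[OF facts(1)] facts(2)] .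
qed

lemma qbg_edge_wall_crossing:
  assumes e: "qbg_edge R r alpha J w b w'"
    and hr: "highest_root R r alpha \<theta>" and a: "a \<in> wall_roots \<theta>"
    and pos: "coroot_pair (w lam) a > 0" and nonpos: "coroot_pair (w' lam) a \<le> 0"
  shows "coroot_pair (w lam) a = coroot_pair lam b"
proof -
  note facts = qbg_edge_facts[OF e]
  have "w b = a"
    using wall_crossing_root_eq[OF hr a facts(4) _ pos _ qbg_edge_length_condition[OF e]]
      facts(3,7,8) nonpos by simp
  then show ?thesis
    using facts(8) by simp
qed

lemma qbg_edge_pairing_diff_Ints:
  assumes e: "qbg_edge R r alpha J w b w'" and a: "a \<in> R" and \<sigma>: "\<sigma> * coroot_pair lam b \<in> \<int>"
  shows "\<sigma> * coroot_pair (w' lam) a - \<sigma> * coroot_pair (w lam) a \<in> \<int>"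
proof -
  note facts = qbg_edge_facts[OF e]
  have "coroot_pair (w' lam) a - coroot_pair (w lam) a = - (coroot_pair lam b * coroot_pair (w b) a)"
    using facts(7,8) coroot_pair_refl_v_left[of "w b" "w lam" a] by simp
  then have "\<sigma> * coroot_pair (w' lam) a - \<sigma> * coroot_pair (w lam) a
      = - ((\<sigma> * coroot_pair lam b) * coroot_pair (w b) a)"
    by (simp add: right_diff_distrib[symmetric])
  then show ?thesis
    using \<sigma> coroot_pair_roots_Ints[OF a facts(4)] by (simp add: Ints_mult Ints_minus)
qed

lemma sigma_path_pairing_diff_Ints:
  assumes p: "sigma_path R r alpha lam \<sigma> y x n ws bs" and a: "a \<in> R" and kl: "k \<le> l" "l \<le> n"
  shows "\<sigma> * coroot_pair ((ws ! k) lam) a - \<sigma> * coroot_pair ((ws ! l) lam) a \<in> \<int>"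
  using kl
proof (induction l rule: dec_induct)
  case (step l)
  then have "qbg_edge R r alpha J (ws ! (l+1)) (bs ! l) (ws ! l)" "\<sigma> * coroot_pair lam (bs ! l) \<in> \<int>"
    using p by (auto simp: sigma_path_def)
  from qbg_edge_pairing_diff_Ints[OF this(1) a this(2)] step show ?case
    using Ints_add by fastforce
qed simp

lemma sigma_path_wall_Ints:
  assumes p: "sigma_path R r alpha lam \<sigma> y x n ws bs"
    and hr: "highest_root R r alpha \<theta>" and a: "a \<in> wall_roots \<theta>"
    and pos: "coroot_pair (y lam) a > 0" and k: "k < n" "coroot_pair ((ws ! k) lam) a \<le> 0"
  shows "\<sigma> * coroot_pair (x lam) a \<in> \<int>"
proof -
  have aR: "a \<in> R"
    using wall_roots_subset[OF hr] a by blast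
  have ends: "ws ! 0 = x" "ws ! n = y"
    using p by (simp_all add: sigma_path_def)
  \<comment> \<open>The last vertex before \<open>y\<close> on the nonpositive side of the wall.\<close>
  obtain i where i: "i < n - k" "coroot_pair ((ws ! (k + i)) lam) a \<le> 0"
    "coroot_pair ((ws ! (k + Suc i)) lam) a > 0"
    using ex_least_nat_less[of "\<lambda>i. coroot_pair ((ws ! (k + i)) lam) a > 0" "n - k"] k pos ends
    by (auto simp: not_less)
  let ?k = "k + i"
  have "qbg_edge R r alpha J (ws ! (?k + 1)) (bs ! ?k) (ws ! ?k)"
    and \<sigma>b: "\<sigma> * coroot_pair lam (bs ! ?k) \<in> \<int>"
    using p i(1) by (auto simp: sigma_path_def)
  from qbg_edge_wall_crossing[OF this(1) hr a] i have "\<sigma> * coroot_pair ((ws ! (?k + 1)) lam) a \<in> \<int>"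
    using \<sigma>b by simp
  moreover have "\<sigma> * coroot_pair (x lam) a - \<sigma> * coroot_pair ((ws ! (?k + 1)) lam) a \<in> \<int>"
    using sigma_path_pairing_diff_Ints[OF p aR, of 0 "?k + 1"] i(1) ends by simp
  ultimately show ?thesis
    using Ints_add by fastforce
qed


lemma in_Bcl_sigma_path:
  assumes eta: "in_Bcl R r alpha lam s x \<sigma>" and u: "u \<in> {1..<s}"
  obtains n ws bs where "sigma_path R r alpha lam (of_rat (\<sigma> u)) (x (u+1)) (x u) n ws bs" "0 < n"
proof -
  have "\<exists>n ws bs. sigma_path R r alpha lam (of_rat (\<sigma> u)) (x (u+1)) (x u) n ws bs"
    using eta u unfolding in_Bcl_def by blast
  then obtain n ws bs where p: "sigma_path R r alpha lam (of_rat (\<sigma> u)) (x (u+1)) (x u) n ws bs"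
    by blast
  moreover have "x u \<noteq> x (u+1)"
    using eta u by (simp add: in_Bcl_def)
  ultimately have "0 < n"
    by (auto simp: sigma_path_def)
  with p show ?thesis
    using that by blast
qed

lemma H_eta_Ints_if_breakpoint_Ints:
  assumes eta: "in_Bcl R r alpha lam s x \<sigma>" and a: "a \<in> R"
    and pair: "\<And>\<mu>. pair_I alpha \<theta> \<mu> j = coroot_pair \<mu> a"
    and u: "1 \<le> u" "u \<le> s" and brk: "of_rat (\<sigma> u) * coroot_pair (x u lam) a \<in> \<int>"
  shows "H_eta alpha \<theta> lam s x \<sigma> j (of_rat (\<sigma> u)) \<in> \<int>"
proof -
  have \<sigma>0: "\<sigma> 0 = 0" and mono: "\<And>k. k < s \<Longrightarrow> \<sigma> k < \<sigma> (Suc k)"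
    using eta by (simp_all add: in_Bcl_def)
  have "of_rat (\<sigma> l) * coroot_pair (x l lam) a - of_rat (\<sigma> l) * coroot_pair (x (Suc l) lam) a
      \<in> \<int>" if l: "l \<in> {1..<u}" for l
  proof -
    have "l \<in> {1..<s}"
      using l u(2) by simp
    then obtain n ws bs where p: "sigma_path R r alpha lam (of_rat (\<sigma> l)) (x (l+1)) (x l) n ws bs"
      using in_Bcl_sigma_path[OF eta] by blast
    then show ?thesis
      using sigma_path_pairing_diff_Ints[OF p a le0, of n] by (simp add: sigma_path_def)
  qed
  then have "(\<Sum>l\<in>{1..<u}. of_rat (\<sigma> l) * coroot_pair (x l lam) a
      - of_rat (\<sigma> l) * coroot_pair (x (Suc l) lam) a) \<in> \<int>"
    by (rule Ints_sum)
  with brk show ?thesis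
    using H_eta_at_breakpoint[where alpha = alpha and \<theta> = \<theta> and lam = lam and x = x and j = j,
        OF \<sigma>0 mono u]
    by (simp add: pair right_diff_distrib)
qed


lemma H_eta_Ints_if_wall_crossed:
  assumes hr: "highest_root R r alpha \<theta>" and eta: "in_Bcl R r alpha lam s x \<sigma>"
    and j: "j \<in> {0..r}" and u: "u \<in> {1..<s}" and pos: "pair_I alpha \<theta> (x (u+1) lam) j > 0"
    and p: "sigma_path R r alpha lam (of_rat (\<sigma> u)) (x (u+1)) (x u) n ws bs"
    and k: "k < n" "pair_I alpha \<theta> ((ws ! k) lam) j \<le> 0"
  shows "H_eta alpha \<theta> lam s x \<sigma> j (of_rat (\<sigma> u)) \<in> \<int>"
proof -
  define a where "a = (if j = 0 then - \<theta> else alpha j)"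
  have a: "a \<in> wall_roots \<theta>"
    using j by (auto simp: a_def wall_roots_def)
  have pair: "\<And>\<mu>. pair_I alpha \<theta> \<mu> j = coroot_pair \<mu> a"
    by (simp add: a_def pair_I_eq)
  have "of_rat (\<sigma> u) * coroot_pair (x u lam) a \<in> \<int>"
    using sigma_path_wall_Ints[OF p hr a _ k(1)] pos k(2) by (simp add: pair)
  then show ?thesis
    using H_eta_Ints_if_breakpoint_Ints[OF eta _ pair] wall_roots_subset[OF hr] a u by auto
qed
end

theorem lemma4p10:
  fixes R :: "'a::euclidean_space set" and r :: nat and alpha :: "nat \<Rightarrow> 'a" and \<theta> :: 'a
    and m :: "nat \<Rightarrow> nat" and lam :: 'a
    and s :: nat and x :: "nat \<Rightarrow> ('a \<Rightarrow> 'a)" and \<sigma> :: "nat \<Rightarrow> rat"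
    and j :: nat and u :: nat
  assumes rs: "root_system R" and irr: "irreducible_rs R" and rpos: "r \<ge> 1"
    and simple: "simple_system R r alpha"
    and hr: "highest_root R r alpha \<theta>"
    and lam: "\<forall>i\<in>{1..r}. coroot_pair lam (alpha i) = real (m i)"
    and eta: "in_Bcl R r alpha lam s x \<sigma>"
    and j: "j \<in> {0..r}"
    and u: "1 \<le> u" "u \<le> s - 1"
    and pos: "pair_I alpha \<theta> (x (u+1) lam) j > 0"
  shows "(\<forall>n ws bs. sigma_path R r alpha lam (of_rat (\<sigma> u)) (x (u+1)) (x u) n ws bs \<and>
              (\<exists>k<n. pair_I alpha \<theta> ((ws ! k) lam) j \<le> 0)
            \<longrightarrow> H_eta alpha \<theta> lam s x \<sigma> j (of_rat (\<sigma> u)) \<in> \<int>) \<and>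
         (pair_I alpha \<theta> (x u lam) j \<le> 0 \<longrightarrow> H_eta alpha \<theta> lam s x \<sigma> j (of_rat (\<sigma> u)) \<in> \<int>)"
proof -
  interpret dominant_weight R r alpha lam m
    using rs simple lam by unfold_locales
  have us: "u \<in> {1..<s}"
    using u by auto
  note H_Ints = H_eta_Ints_if_wall_crossed[OF hr eta j us pos]
  obtain n ws bs where p: "sigma_path R r alpha lam (of_rat (\<sigma> u)) (x (u+1)) (x u) n ws bs" "0 < n"
    using in_Bcl_sigma_path[OF eta us] .
  show ?thesis
  proof (intro conjI allI impI)
    fix n' ws' bs'
    assume "sigma_path R r alpha lam (of_rat (\<sigma> u)) (x (u+1)) (x u) n' ws' bs'
      \<and> (\<exists>k<n'. pair_I alpha \<theta> ((ws' ! k) lam) j \<le> 0)"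
    then show "H_eta alpha \<theta> lam s x \<sigma> j (of_rat (\<sigma> u)) \<in> \<int>"
      using H_Ints by blast
  next
    assume "pair_I alpha \<theta> (x u lam) j \<le> 0"
    then show "H_eta alpha \<theta> lam s x \<sigma> j (of_rat (\<sigma> u)) \<in> \<int>"
      using H_Ints[OF p] p(1) by (simp add: sigma_path_def)
  qed
qed

end
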